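(* Fix a positive integer $m$. For each $n\ge1$ and real coefficients $a^{\pm}_{i,j},b^{\pm}_{i,j}$ ($i+j\le n$) let $p^{\pm}=\sum_{i+j=0}^n a^{\pm}_{i,j}x^iy^j$, $q^{\pm}=\sum_{i+j=0}^n b^{\pm}_{i,j}x^iy^j$ and consider $$(\dot x,\dot y)=\begin{cases}(y+\epsilon p^+(x,y),\,-x+\epsilon q^+(x,y)), & y\ge x^{m},\\ (y+\epsilon p^-(x,y),\,-x+\epsilon q^-(x,y)), & y<x^{m}.\end{cases}$$ Let $H(n)$ be the supremum, over all coefficient choices for which the first order Melnikov function $M$ (defined in the context) is not identically zero on $(0,+\infty)$, of the number of zeros of $M$ in $(0,+\infty)$ counted with multiplicity. Then there exist nonnegative integers $k,l$ (independent of $n$) such that $H(n)\le kn+l$ for all $n\ge1$.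
   Context: For $h>0$, the circle $x^2+y^2=h$ meets the curve $y=x^{m}$ at exactly two points $A_h=(-s,(-s)^m)$ and $B_h=(s,s^m)$, where $s>0$ solves $s^2+s^{2m}=h$. $L_h^+$ is the arc of this circle in $\{y\ge x^{m}\}$, oriented clockwise from $A_h$ to $B_h$; $L_h^-$ is the arc in $\{y\le x^{m}\}$, oriented clockwise from $B_h$ to $A_h$. The first order Melnikov function is $M(h)=\int_{L_h^+}(q^+dx-p^+dy)+\int_{L_h^-}(q^-dx-p^-dy)$, $h\in(0,+\infty)$. *)

theory Defs
  imports "HOL-Analysis.Analysis" "HOL-Library.Extended_Nat"
begin

definition poly2 :: "nat \<Rightarrow> (nat \<Rightarrow> nat \<Rightarrow> real) \<Rightarrow> real \<Rightarrow> real \<Rightarrow> real" where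
  "poly2 n c x y = (\<Sum>i\<le>n. \<Sum>j\<le>n - i. c i j * x ^ i * y ^ j)"

definition sol_s :: "nat \<Rightarrow> real \<Rightarrow> real" where
  "sol_s m h = (THE s. s > 0 \<and> s ^ 2 + s ^ (2 * m) = h)"

text \<open>Line integral of the 1-form Q dx - P dy along the circle of radius r,
  parametrized by (r cos t, r sin t), traversed clockwise from angle alpha
  down to angle beta (beta \<le> alpha). Since dx = -r sin t dt, dy = r cos t dt,
  the integral from t = alpha to t = beta equals the integral below.\<close>
definition cw_arc_int ::
  "(real \<Rightarrow> real \<Rightarrow> real) \<Rightarrow> (real \<Rightarrow> real \<Rightarrow> real) \<Rightarrow> real \<Rightarrow> real \<Rightarrow> real \<Rightarrow> real" where
  "cw_arc_int P Q r alpha beta =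
     integral {beta..alpha}
       (\<lambda>t. Q (r * cos t) (r * sin t) * (r * sin t) + P (r * cos t) (r * sin t) * (r * cos t))"

text \<open>B_h = (s, s^m) has polar angle arctan(s^m/s);
  A_h = (-s, (-s)^m) has polar angle pi + arctan((-s)^m/(-s)).
  L_h^+ : clockwise from A_h to B_h (through the top point (0, sqrt h));
  L_h^- : clockwise from B_h to A_h (through the bottom point).\<close>
definition melnikov ::
  "nat \<Rightarrow> nat \<Rightarrow> (nat \<Rightarrow> nat \<Rightarrow> real) \<Rightarrow> (nat \<Rightarrow> nat \<Rightarrow> real) \<Rightarrow>
   (nat \<Rightarrow> nat \<Rightarrow> real) \<Rightarrow> (nat \<Rightarrow> nat \<Rightarrow> real) \<Rightarrow> real \<Rightarrow> real" where
  "melnikov m n ap bp am bm h =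
     (let s = sol_s m h; r = sqrt h;
          thB = arctan (s ^ m / s);
          thA = pi + arctan ((-s) ^ m / (-s))
      in cw_arc_int (poly2 n ap) (poly2 n bp) r thA thB
       + cw_arc_int (poly2 n am) (poly2 n bm) r thB (thA - 2 * pi))"

definition zero_mult :: "(real \<Rightarrow> real) \<Rightarrow> real \<Rightarrow> enat" where
  "zero_mult f x = (if \<exists>k. (deriv ^^ k) f x \<noteq> 0
                    then enat (LEAST k. (deriv ^^ k) f x \<noteq> 0) else \<infinity>)"

definition zeros_mult :: "(real \<Rightarrow> real) \<Rightarrow> real set \<Rightarrow> enat" where
  "zeros_mult f S = (if finite {x \<in> S. f x = 0}
                     then (\<Sum>x\<in>{x \<in> S. f x = 0}. zero_mult f x) else \<infinity>)"

definition H_bound :: "nat \<Rightarrow> nat \<Rightarrow> enat" where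
  "H_bound m n = (SUP c \<in> {(ap, bp, am, bm). \<exists>h>0. melnikov m n ap bp am bm h \<noteq> 0}.
       (case c of (ap, bp, am, bm) \<Rightarrow> zeros_mult (melnikov m n ap bp am bm) {0<..}))"

end

theory Submission
  imports Defs "HOL-Computational_Algebra.Polynomial"
begin

text \<open>Parametrise the level \<open>h = s\<^sup>2 + s\<^sup>2\<^sup>m\<close> by \<open>s > 0\<close>. In polar coordinates the endpoints \<open>A\<^sub>h\<close>,
  \<open>B\<^sub>h\<close> of the two arcs have angles \<open>\<pi> + arctan ((-s)\<^sup>m\<^sup>-\<^sup>1)\<close> and \<open>arctan (s\<^sup>m\<^sup>-\<^sup>1)\<close>, and the monomial
  \<open>r\<^sup>a\<^sup>+\<^sup>b cos\<^sup>a t sin\<^sup>b t\<close> has an antiderivative \<open>r\<^sup>a\<^sup>+\<^sup>b (g(t) + c t)\<close> with \<open>g\<close> a trigonometric polynomial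
  for which \<open>r\<^sup>a\<^sup>+\<^sup>b g\<close> is a polynomial in \<open>s\<close> at both endpoints. Hence
  \<open>M(s\<^sup>2 + s\<^sup>2\<^sup>m) = P(s) + R(s) \<Theta>(s)\<close> with \<open>deg P, deg R \<le> m(n+1)\<close>, where \<open>\<Theta>\<close> is the opening angle of
  the upper arc and \<open>\<Theta>'\<close> is a rational function. Differentiating \<open>m(n+1) + 1\<close> times kills \<open>P\<close> and \<open>R\<close>
  and leaves a rational function with numerator of degree \<open>O(m\<^sup>2 n)\<close>; by Rolle's theorem, counted with
  multiplicities, \<open>P + R \<Theta>\<close> has at most that many plus \<open>m(n+1) + 1\<close> zeros, and \<open>h \<mapsto> s\<close> is a
  diffeomorphism of \<open>(0, \<infinity>)\<close> preserving zeros together with their multiplicities.\<close>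

subsection \<open>Iterated derivatives and smooth functions\<close>

lemma deriv_funpow_Suc: "(deriv ^^ Suc i) f = (deriv ^^ i) (deriv f)"
  by (simp only: funpow_Suc_right comp_def)

lemma deriv_cong_open:
  assumes "open U" "\<And>x. x \<in> U \<Longrightarrow> f x = g x" "x \<in> U"
  shows "deriv f x = deriv g x"
proof (rule deriv_cong_ev)
  show "\<forall>\<^sub>F y in nhds x. f y = g y"
    using eventually_nhds_in_open[OF assms(1,3)] by (rule eventually_mono) (use assms(2) in auto)
qed simp

lemma deriv_funpow_cong_open:
  assumes "open U" "\<And>x. x \<in> U \<Longrightarrow> f x = g x" "x \<in> U"
  shows "(deriv ^^ i) f x = (deriv ^^ i) g x"
  using assms(2,3)
proof (induction i arbitrary: f g x)
  case 0 thus ?case by simp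
next
  case (Suc i)
  have "\<And>y. y \<in> U \<Longrightarrow> deriv f y = deriv g y"
    using deriv_cong_open[OF assms(1)] Suc.prems by blast
  from Suc.IH[OF this Suc.prems(2)] show ?case by (simp only: deriv_funpow_Suc)
qed

lemma differentiable_cong_open:
  fixes f g :: "real \<Rightarrow> real"
  assumes "open U" "\<And>x. x \<in> U \<Longrightarrow> f x = g x" "x \<in> U" "f differentiable (at x)"
  shows "g differentiable (at x)"
proof -
  have "DERIV f x :> deriv f x" using assms(4) DERIV_deriv_iff_real_differentiable by blast
  hence "DERIV g x :> deriv f x"
    using has_field_derivative_transform_within_open[OF _ assms(1,3)] assms(2) by blast
  thus ?thesis using real_differentiable_def by blast
qed

lemma deriv_funpow_differentiable_cong_open:
  fixes f g :: "real \<Rightarrow> real"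
  assumes "open U" "\<And>x. x \<in> U \<Longrightarrow> f x = g x" "x \<in> U" "(deriv ^^ i) f differentiable (at x)"
  shows "(deriv ^^ i) g differentiable (at x)"
  by (rule differentiable_cong_open[OF assms(1) _ assms(3,4)]) (rule deriv_funpow_cong_open[OF assms(1,2)])

definition smooth_upto :: "real set \<Rightarrow> nat \<Rightarrow> (real \<Rightarrow> real) \<Rightarrow> bool" where
  "smooth_upto U k f \<longleftrightarrow> (\<forall>j<k. \<forall>x\<in>U. (deriv ^^ j) f differentiable (at x))"

definition smooth_on :: "real set \<Rightarrow> (real \<Rightarrow> real) \<Rightarrow> bool" where
  "smooth_on U f \<longleftrightarrow> (\<forall>k. smooth_upto U k f)"

lemma smooth_on_iff: "smooth_on U f \<longleftrightarrow> (\<forall>i. \<forall>x\<in>U. (deriv ^^ i) f differentiable (at x))"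
  unfolding smooth_on_def smooth_upto_def by (meson lessI)

lemma smooth_upto_deriv: "smooth_upto U (Suc k) f \<Longrightarrow> smooth_upto U k (deriv f)"
  unfolding smooth_upto_def by (metis Suc_mono deriv_funpow_Suc)

lemma smooth_upto_DERIV: "smooth_upto U (Suc k) f \<Longrightarrow> x \<in> U \<Longrightarrow> DERIV f x :> deriv f x"
  unfolding smooth_upto_def using DERIV_deriv_iff_real_differentiable
  by (metis funpow_0 zero_less_Suc)

lemma smooth_on_deriv: "smooth_on U f \<Longrightarrow> smooth_on U (deriv f)"
  unfolding smooth_on_def using smooth_upto_deriv by blast

lemma smooth_on_DERIV: "smooth_on U f \<Longrightarrow> x \<in> U \<Longrightarrow> DERIV f x :> deriv f x"
  unfolding smooth_on_def using smooth_upto_DERIV by blast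

lemma smooth_on_smooth_upto: "smooth_on U f \<Longrightarrow> smooth_upto U k f"
  unfolding smooth_on_def by blast

lemma smooth_on_subset: "smooth_on U f \<Longrightarrow> V \<subseteq> U \<Longrightarrow> smooth_on V f"
  unfolding smooth_on_iff by blast

lemma deriv_funpow_add:
  assumes "open U" "smooth_upto U i f" "smooth_upto U i g" "x \<in> U"
  shows "(deriv ^^ i) (\<lambda>x. f x + g x) x = (deriv ^^ i) f x + (deriv ^^ i) g x"
  using assms(2-4)
proof (induction i arbitrary: f g x)
  case 0 thus ?case by simp
next
  case (Suc i)
  have "\<And>y. y \<in> U \<Longrightarrow> deriv (\<lambda>x. f x + g x) y = deriv f y + deriv g y"
    by (rule DERIV_imp_deriv, rule DERIV_add; rule smooth_upto_DERIV) (use Suc.prems in auto)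
  hence "(deriv ^^ i) (deriv (\<lambda>x. f x + g x)) x = (deriv ^^ i) (\<lambda>y. deriv f y + deriv g y) x"
    by (rule deriv_funpow_cong_open[OF assms(1)]) (use Suc.prems in auto)
  also have "\<dots> = (deriv ^^ i) (deriv f) x + (deriv ^^ i) (deriv g) x"
    by (rule Suc.IH) (use Suc.prems smooth_upto_deriv in auto)
  finally show ?case by (simp only: deriv_funpow_Suc)
qed

lemma smooth_upto_add:
  assumes "open U" "smooth_upto U k f" "smooth_upto U k g"
  shows "smooth_upto U k (\<lambda>x. f x + g x)"
  unfolding smooth_upto_def
proof (intro allI impI ballI)
  fix j x assume j: "j < k" and x: "x \<in> U"
  have fg: "smooth_upto U j f" "smooth_upto U j g" using assms j unfolding smooth_upto_def by auto
  have "(\<lambda>y. (deriv ^^ j) f y + (deriv ^^ j) g y) differentiable (at x)"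
    using assms j x unfolding smooth_upto_def by auto
  thus "(deriv ^^ j) (\<lambda>x. f x + g x) differentiable (at x)"
    by (rule differentiable_cong_open[OF assms(1) _ x, rotated])
       (rule deriv_funpow_add[symmetric, OF assms(1) fg])
qed

lemma smooth_upto_mult:
  assumes "open U" "smooth_on U f" "smooth_on U g"
  shows "smooth_upto U k (\<lambda>x. f x * g x)"
  using assms(2,3)
proof (induction k arbitrary: f g)
  case 0 thus ?case by (simp add: smooth_upto_def)
next
  case (Suc k)
  have e: "\<And>y. y \<in> U \<Longrightarrow> deriv (\<lambda>x. f x * g x) y = deriv f y * g y + deriv g y * f y"
    by (rule DERIV_imp_deriv, rule DERIV_mult; rule smooth_on_DERIV) (use Suc.prems in auto)
  have sum: "smooth_upto U k (\<lambda>y. deriv f y * g y + deriv g y * f y)"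
    by (intro smooth_upto_add assms(1) Suc.IH smooth_on_deriv Suc.prems)
  have d: "smooth_upto U k (deriv (\<lambda>x. f x * g x))"
    unfolding smooth_upto_def
  proof (intro allI impI ballI)
    fix j x assume "j < k" and x: "x \<in> U"
    with sum have "(deriv ^^ j) (\<lambda>y. deriv f y * g y + deriv g y * f y) differentiable (at x)"
      unfolding smooth_upto_def by blast
    then show "(deriv ^^ j) (deriv (\<lambda>x. f x * g x)) differentiable (at x)"
      by (rule deriv_funpow_differentiable_cong_open[OF assms(1) _ x, rotated]) (simp add: e)
  qed
  show ?case
    unfolding smooth_upto_def
  proof (intro allI impI ballI)
    fix j x assume j: "j < Suc k" and x: "x \<in> U"
    show "(deriv ^^ j) (\<lambda>x. f x * g x) differentiable (at x)"
    proof (cases j)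
      case 0
      have "f differentiable (at x)" "g differentiable (at x)"
        using Suc.prems x smooth_on_DERIV real_differentiable_def by blast+
      thus ?thesis using 0 by simp
    next
      case (Suc j')
      hence "(deriv ^^ j') (deriv (\<lambda>x. f x * g x)) differentiable (at x)"
        using d j x unfolding smooth_upto_def by simp
      thus ?thesis unfolding Suc deriv_funpow_Suc .
    qed
  qed
qed

lemma smooth_on_mult:
  assumes "open U" "smooth_on U f" "smooth_on U g"
  shows "smooth_on U (\<lambda>x. f x * g x)"
  unfolding smooth_on_def[of U "\<lambda>x. f x * g x"] using smooth_upto_mult[OF assms] by (rule allI)

lemma deriv_funpow_mult_vanishing:
  assumes U: "open U" "x0 \<in> U" and su: "smooth_on U u" and sv: "smooth_on U v"
    and z: "\<forall>i<k. (deriv ^^ i) u x0 = 0"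
  shows "(\<forall>i<k. (deriv ^^ i) (\<lambda>x. u x * v x) x0 = 0) \<and>
         (deriv ^^ k) (\<lambda>x. u x * v x) x0 = (deriv ^^ k) u x0 * v x0"
  using su sv z
proof (induction k arbitrary: u v)
  case 0 thus ?case by simp
next
  case (Suc k)
  have su': "smooth_on U (deriv u)" and sv': "smooth_on U (deriv v)"
    using Suc.prems smooth_on_deriv by auto
  have z1: "\<forall>i<k. (deriv ^^ i) (deriv u) x0 = 0"
    using Suc.prems(3) by (metis Suc_mono deriv_funpow_Suc)
  have z2: "\<forall>i<k. (deriv ^^ i) u x0 = 0" using Suc.prems(3) by auto
  note IH1 = Suc.IH[OF su' Suc.prems(2) z1] and IH2 = Suc.IH[OF Suc.prems(1) sv' z2]
  have e: "\<And>y. y \<in> U \<Longrightarrow> deriv (\<lambda>x. u x * v x) y = deriv u y * v y + u y * deriv v y"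
    by (rule DERIV_imp_deriv, rule DERIV_mult'[THEN DERIV_cong]; (rule smooth_on_DERIV)?) (use Suc.prems in auto)
  have p1: "smooth_on U (\<lambda>y. deriv u y * v y)" by (rule smooth_on_mult[OF U(1) su' Suc.prems(2)])
  have p2: "smooth_on U (\<lambda>y. u y * deriv v y)" by (rule smooth_on_mult[OF U(1) Suc.prems(1) sv'])
  have D: "(deriv ^^ Suc i) (\<lambda>x. u x * v x) x0 =
      (deriv ^^ i) (\<lambda>y. deriv u y * v y) x0 + (deriv ^^ i) (\<lambda>y. u y * deriv v y) x0" for i
  proof -
    have "(deriv ^^ Suc i) (\<lambda>x. u x * v x) x0 = (deriv ^^ i) (\<lambda>y. deriv u y * v y + u y * deriv v y) x0"
      unfolding deriv_funpow_Suc by (rule deriv_funpow_cong_open[OF U(1) _ U(2)]) (simp add: e)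
    also have "\<dots> = (deriv ^^ i) (\<lambda>y. deriv u y * v y) x0 + (deriv ^^ i) (\<lambda>y. u y * deriv v y) x0"
      by (rule deriv_funpow_add[OF U(1) smooth_on_smooth_upto[OF p1] smooth_on_smooth_upto[OF p2] U(2)])
    finally show ?thesis .
  qed
  have "(deriv ^^ i) (\<lambda>x. u x * v x) x0 = 0" if i: "i < Suc k" for i
  proof (cases i)
    case 0 thus ?thesis using Suc.prems(3)[rule_format, of 0] by simp
  next
    case (Suc i') thus ?thesis using D[of i'] IH1 IH2 i by simp
  qed
  moreover have "(deriv ^^ Suc k) (\<lambda>x. u x * v x) x0 = (deriv ^^ k) (deriv u) x0 * v x0"
    using D[of k] IH1 IH2 Suc.prems(3) by (simp del: funpow.simps)
  ultimately show ?case unfolding deriv_funpow_Suc[of k u] by blast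
qed

lemma deriv_funpow_poly: "(deriv ^^ i) (\<lambda>x. poly p x) = (\<lambda>x. poly ((pderiv ^^ i) p) x)"
proof (induction i)
  case 0 thus ?case by simp
next
  case (Suc i)
  show ?case by (simp add: Suc.IH) (rule ext, rule DERIV_imp_deriv, rule poly_DERIV)
qed

lemma smooth_on_poly: "smooth_on U (\<lambda>x. poly p x)"
  unfolding smooth_on_iff deriv_funpow_poly
  using poly_DERIV real_differentiable_def by blast

lemma DERIV_poly_quot:
  fixes N D :: "real poly"
  assumes "poly D x \<noteq> 0"
  shows "DERIV (\<lambda>s. poly N s / poly D s ^ j) x :>
           poly (pderiv N * D - smult (of_nat j) (N * pderiv D)) x / poly D x ^ Suc j"
proof -
  have d: "DERIV (\<lambda>s. poly N s / poly D s ^ j) x :>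
      (poly (pderiv N) x * poly D x ^ j - (of_nat j * (poly (pderiv D) x * poly D x ^ (j - Suc 0))) * poly N x)
        / ((poly D x ^ j) ^ Suc (Suc 0))"
    by (rule DERIV_quotient[OF poly_DERIV DERIV_power[OF poly_DERIV]]) (use assms in simp)
  show ?thesis
  proof (rule DERIV_cong[OF d])
    show "(poly (pderiv N) x * poly D x ^ j - (of_nat j * (poly (pderiv D) x * poly D x ^ (j - Suc 0))) * poly N x)
        / ((poly D x ^ j) ^ Suc (Suc 0)) = poly (pderiv N * D - smult (of_nat j) (N * pderiv D)) x / poly D x ^ Suc j"
      using assms by (cases j) (simp_all add: field_simps power_Suc)
  qed
qed

lemma smooth_on_poly_quot:
  fixes N D :: "real poly"
  assumes U: "open U" and D: "\<And>x. x \<in> U \<Longrightarrow> poly D x \<noteq> 0"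
  shows "smooth_on U (\<lambda>s. poly N s / poly D s ^ j)"
proof -
  have "\<forall>N j. \<forall>x\<in>U. (deriv ^^ i) (\<lambda>s. poly N s / poly D s ^ j) differentiable (at x)" for i
  proof (induction i)
    case 0
    show ?case using DERIV_poly_quot D real_differentiable_def by simp blast
  next
    case (Suc i)
    show ?case
    proof (intro allI ballI)
      fix N :: "real poly" and j x assume x: "x \<in> U"
      let ?N' = "pderiv N * D - smult (of_nat j) (N * pderiv D)"
      have "(deriv ^^ i) (\<lambda>s. poly ?N' s / poly D s ^ Suc j) differentiable (at x)"
        using Suc x by blast
      hence "(deriv ^^ i) (deriv (\<lambda>s. poly N s / poly D s ^ j)) differentiable (at x)"
        by (rule deriv_funpow_differentiable_cong_open[OF U _ x, rotated])
           (rule DERIV_imp_deriv[OF DERIV_poly_quot, symmetric], rule D)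
      thus "(deriv ^^ Suc i) (\<lambda>s. poly N s / poly D s ^ j) differentiable (at x)"
        by (simp only: deriv_funpow_Suc)
    qed
  qed
  thus ?thesis unfolding smooth_on_iff by blast
qed

lemma deriv_funpow_power_shift:
  fixes s0 :: real
  assumes "i \<le> k"
  shows "(deriv ^^ i) (\<lambda>s. (s - s0) ^ k) = (\<lambda>s. of_nat (\<Prod>l<i. k - l) * (s - s0) ^ (k - i))"
  using assms
proof (induction i)
  case 0 thus ?case by simp
next
  case (Suc i)
  have "DERIV (\<lambda>s. of_nat (\<Prod>l<i. k - l) * (s - s0) ^ (k - i)) x :>
        of_nat (\<Prod>l<Suc i. k - l) * (x - s0) ^ (k - Suc i)" for x
    by (rule DERIV_cong, (rule derivative_eq_intros refl)+) (simp add: mult.assoc)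
  hence "deriv (\<lambda>s. of_nat (\<Prod>l<i. k - l) * (s - s0) ^ (k - i)) =
      (\<lambda>x. of_nat (\<Prod>l<Suc i. k - l) * (x - s0) ^ (k - Suc i))"
    by (intro ext DERIV_imp_deriv)
  thus ?case using Suc by simp
qed

lemma deriv_funpow_power_shift_at:
  fixes s0 :: real
  shows "\<forall>i<k. (deriv ^^ i) (\<lambda>s. (s - s0) ^ k) s0 = 0" "(deriv ^^ k) (\<lambda>s. (s - s0) ^ k) s0 \<noteq> 0"
  using deriv_funpow_power_shift[of _ k s0] by auto

subsection \<open>Counting zeros with multiplicity\<close>

lemma zero_mult_le_Suc_deriv: "zero_mult f x \<le> zero_mult (deriv f) x + 1"
proof (cases "\<exists>k. (deriv ^^ k) (deriv f) x \<noteq> 0")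
  case True
  let ?L = "LEAST k. (deriv ^^ k) (deriv f) x \<noteq> 0"
  have "(deriv ^^ Suc ?L) f x \<noteq> 0"
    unfolding deriv_funpow_Suc by (rule LeastI_ex[OF True])
  hence "(LEAST k. (deriv ^^ k) f x \<noteq> 0) \<le> Suc ?L" "\<exists>k. (deriv ^^ k) f x \<noteq> 0"
    by (blast intro: Least_le)+
  thus ?thesis unfolding zero_mult_def using True by (simp add: one_enat_def)
next
  case False
  thus ?thesis unfolding zero_mult_def by simp
qed

lemma zero_mult_eq_0: "f x \<noteq> 0 \<Longrightarrow> zero_mult f x = 0"
  unfolding zero_mult_def by (metis (mono_tags, lifting) Least_eq_0 funpow_0 zero_enat_def)

lemma zero_mult_ge_1:
  assumes "f x = 0"
  shows "1 \<le> zero_mult f x"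
proof (cases "\<exists>k. (deriv ^^ k) f x \<noteq> 0")
  case True
  have "(LEAST k. (deriv ^^ k) f x \<noteq> 0) \<noteq> 0"
    using LeastI_ex[OF True] assms by (metis funpow_0)
  thus ?thesis unfolding zero_mult_def using True by (simp add: one_enat_def)
qed (simp add: zero_mult_def)

lemma zero_mult_le_nonzero_deriv: "(deriv ^^ k) f x \<noteq> 0 \<Longrightarrow> zero_mult f x \<le> enat k"
  unfolding zero_mult_def by (auto intro: Least_le)

lemma zero_mult_enatD:
  assumes "zero_mult f x = enat k"
  shows "(deriv ^^ k) f x \<noteq> 0" "\<forall>i<k. (deriv ^^ i) f x = 0"
proof -
  have ex: "\<exists>k. (deriv ^^ k) f x \<noteq> 0" using assms unfolding zero_mult_def by (auto split: if_splits)
  hence k: "k = (LEAST k. (deriv ^^ k) f x \<noteq> 0)" using assms unfolding zero_mult_def by simp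
  show "(deriv ^^ k) f x \<noteq> 0" unfolding k by (rule LeastI_ex[OF ex])
  show "\<forall>i<k. (deriv ^^ i) f x = 0" unfolding k using not_less_Least by blast
qed

lemma zeros_mult_eq: "zeros_mult f {0<..} =
    (if finite {x. 0 < x \<and> f x = 0} then \<Sum>x | 0 < x \<and> f x = 0. zero_mult f x else \<infinity>)"
  unfolding zeros_mult_def by (simp add: greaterThan_def)

lemma Rolle_deriv_zero_between:
  fixes f :: "real \<Rightarrow> real"
  assumes diff: "\<And>x. 0 < x \<Longrightarrow> f differentiable (at x)"
    and "0 < a" "a < b" "f a = 0" "f b = 0"
  obtains y where "a < y" "y < b" "deriv f y = 0"
proof -
  have cont: "continuous_on {a..b} f"
    using diff assms(2) by (intro continuous_at_imp_continuous_on) (auto intro: differentiable_imp_continuous_within)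
  have der: "\<And>x. a < x \<Longrightarrow> x < b \<Longrightarrow> (f has_derivative (*) (deriv f x)) (at x)"
    using diff assms(2) DERIV_deriv_iff_real_differentiable has_field_derivative_def
    by (metis order.strict_trans)
  obtain y where y: "a < y" "y < b" "(*) (deriv f y) = (\<lambda>v. 0)"
    using Rolle_deriv[OF assms(3) _ cont der] assms(4,5) by auto
  moreover have "deriv f y = 0" using fun_cong[OF y(3), of 1] by simp
  ultimately show ?thesis using that by blast
qed

text \<open>A Rolle point between consecutive zeros of \<open>f\<close> is a zero of \<open>f'\<close>; it compensates for the unit lost at
  each zero of \<open>f\<close>, where \<open>zero_mult f \<le> zero_mult f' + 1\<close>.\<close>
lemma Rolle_zeros_mult_sum:
  fixes f :: "real \<Rightarrow> real"
  assumes diff: "\<And>x. 0 < x \<Longrightarrow> f differentiable (at x)"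
    and S: "finite S" "S \<noteq> {}" "S \<subseteq> {x. 0 < x \<and> f x = 0}"
  obtains T where "finite T" "T \<subseteq> {x. 0 < x \<and> deriv f x = 0}" "card S \<le> card T + 1"
    "(\<Sum>x\<in>S. zero_mult f x) \<le> (\<Sum>x\<in>T. zero_mult (deriv f) x) + 1"
proof -
  let ?Z' = "{x. 0 < x \<and> deriv f x = 0}"
  have "S \<noteq> {} \<longrightarrow> S \<subseteq> {x. 0 < x \<and> f x = 0} \<longrightarrow> (\<exists>T. finite T \<and> T \<subseteq> ?Z' \<and> T \<subseteq> {..Max S} \<and>
      card S \<le> card T + 1 \<and> (\<Sum>x\<in>S. zero_mult f x) \<le> (\<Sum>x\<in>T. zero_mult (deriv f) x) + 1)"
    using S(1)
  proof (induction S rule: finite_linorder_max_induct)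
    case empty then show ?case by simp
  next
    case (insert b A)
    show ?case
    proof (intro impI)
      assume Sub: "insert b A \<subseteq> {x. 0 < x \<and> f x = 0}"
      define Tb where "Tb = (if deriv f b = 0 then {b} else {})"
      have Tb: "finite Tb" "Tb \<subseteq> ?Z'" "Tb \<subseteq> {b}" using Sub by (auto simp: Tb_def)
      have mb: "zero_mult f b \<le> (\<Sum>x\<in>Tb. zero_mult (deriv f) x) + 1"
        using zero_mult_le_Suc_deriv[of f b] zero_mult_eq_0[of "deriv f" b] by (auto simp: Tb_def)
      have Max: "Max (insert b A) = b"
        using insert.hyps by (simp add: Max_insert2 less_imp_le)
      show "\<exists>T. finite T \<and> T \<subseteq> ?Z' \<and> T \<subseteq> {..Max (insert b A)} \<and> card (insert b A) \<le> card T + 1 \<and>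
          (\<Sum>x\<in>insert b A. zero_mult f x) \<le> (\<Sum>x\<in>T. zero_mult (deriv f) x) + 1"
      proof (cases "A = {}")
        case True
        thus ?thesis using Tb mb Max by (intro exI[of _ Tb]) auto
      next
        case False
        with insert.IH Sub obtain T0 where T0: "finite T0" "T0 \<subseteq> ?Z'" "T0 \<subseteq> {..Max A}"
          "card A \<le> card T0 + 1" "(\<Sum>x\<in>A. zero_mult f x) \<le> (\<Sum>x\<in>T0. zero_mult (deriv f) x) + 1"
          by auto
        have a: "Max A \<in> A" "Max A < b" using False insert.hyps by auto
        then obtain y where y: "Max A < y" "y < b" "deriv f y = 0"
          using Rolle_deriv_zero_between[OF diff, of "Max A" b] Sub by auto
        have yT0: "y \<notin> T0" using T0(3) y by force
        have disj: "insert y T0 \<inter> Tb = {}" using Tb(3) T0(3) y a by force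
        have y0: "0 < y" using a Sub y by force
        have bA: "b \<notin> A" using insert.hyps by blast
        have "(\<Sum>x\<in>insert b A. zero_mult f x) = zero_mult f b + (\<Sum>x\<in>A. zero_mult f x)"
          using insert.hyps(1) bA by simp
        also have "\<dots> \<le> ((\<Sum>x\<in>Tb. zero_mult (deriv f) x) + 1) + ((\<Sum>x\<in>T0. zero_mult (deriv f) x) + 1)"
          by (rule add_mono[OF mb T0(5)])
        also have "\<dots> \<le> (\<Sum>x\<in>Tb. zero_mult (deriv f) x) + (zero_mult (deriv f) y + (\<Sum>x\<in>T0. zero_mult (deriv f) x)) + 1"
          using zero_mult_ge_1[of "deriv f" y] y by (simp add: add_mono algebra_simps)
        also have "\<dots> = (\<Sum>x\<in>insert y T0 \<union> Tb. zero_mult (deriv f) x) + 1"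
          by (subst sum.union_disjoint[OF _ Tb(1) disj]) (simp_all add: T0(1) yT0 ac_simps)
        finally have sum: "(\<Sum>x\<in>insert b A. zero_mult f x) \<le> (\<Sum>x\<in>insert y T0 \<union> Tb. zero_mult (deriv f) x) + 1" .
        have card: "card (insert b A) \<le> card (insert y T0 \<union> Tb) + 1"
          using T0(1,4) Tb(1) disj yT0 bA insert.hyps(1) by (simp add: card_Un_disjoint)
        have sub: "insert y T0 \<union> Tb \<subseteq> ?Z'" using T0(2) Tb(2) y y0 by blast
        have le: "insert y T0 \<union> Tb \<subseteq> {..Max (insert b A)}"
          using T0(3) Tb(3) y a unfolding Max by auto
        have fin: "finite (insert y T0 \<union> Tb)" using T0(1) Tb(1) by blast
        show ?thesis by (rule exI[of _ "insert y T0 \<union> Tb"]) (intro conjI fin sub le card sum)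
      qed
    qed
  qed
  with S that show ?thesis by blast
qed

lemma zeros_mult_le_deriv:
  fixes f :: "real \<Rightarrow> real"
  assumes diff: "\<And>x. 0 < x \<Longrightarrow> f differentiable (at x)"
  shows "zeros_mult f {0<..} \<le> zeros_mult (deriv f) {0<..} + 1"
proof (cases "finite {x. 0 < x \<and> deriv f x = 0}")
  case False
  thus ?thesis unfolding zeros_mult_eq by simp
next
  case fin': True
  let ?Z = "{x. 0 < x \<and> f x = 0}" and ?Z' = "{x. 0 < x \<and> deriv f x = 0}"
  have finZ: "finite ?Z"
  proof (rule ccontr)
    assume "infinite ?Z"
    then obtain S where S: "finite S" "card S = card ?Z' + 2" "S \<subseteq> ?Z"
      using infinite_arbitrarily_large by blast
    have ne: "S \<noteq> {}" using S(2) by auto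
    obtain T where "finite T" "T \<subseteq> ?Z'" "card S \<le> card T + 1"
      "(\<Sum>x\<in>S. zero_mult f x) \<le> (\<Sum>x\<in>T. zero_mult (deriv f) x) + 1"
      by (rule Rolle_zeros_mult_sum[OF diff S(1) ne S(3)])
    thus False using card_mono[OF fin', of T] S(2) by linarith
  qed
  show ?thesis
  proof (cases "?Z = {}")
    case True
    show ?thesis unfolding zeros_mult_eq True by simp
  next
    case False
    obtain T where T: "finite T" "T \<subseteq> ?Z'" "card ?Z \<le> card T + 1"
      "(\<Sum>x\<in>?Z. zero_mult f x) \<le> (\<Sum>x\<in>T. zero_mult (deriv f) x) + 1"
      by (rule Rolle_zeros_mult_sum[OF diff finZ False order.refl])
    have "(\<Sum>x\<in>T. zero_mult (deriv f) x) \<le> (\<Sum>x\<in>?Z'. zero_mult (deriv f) x)"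
      by (rule sum_mono2[OF fin' T(2)]) simp
    hence "(\<Sum>x\<in>?Z. zero_mult f x) \<le> (\<Sum>x\<in>?Z'. zero_mult (deriv f) x) + 1"
      by (rule order.trans[OF T(4) add_right_mono])
    thus ?thesis unfolding zeros_mult_eq using finZ fin' by simp
  qed
qed

lemma zeros_mult_le_deriv_funpow:
  fixes f :: "real \<Rightarrow> real"
  assumes diff: "\<And>j x. 0 < x \<Longrightarrow> (deriv ^^ j) f differentiable (at x)"
  shows "zeros_mult f {0<..} \<le> zeros_mult ((deriv ^^ j) f) {0<..} + enat j"
proof (induction j)
  case 0 thus ?case by (simp add: zero_enat_def[symmetric])
next
  case (Suc j)
  have "zeros_mult ((deriv ^^ j) f) {0<..} \<le> zeros_mult ((deriv ^^ Suc j) f) {0<..} + 1"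
    using zeros_mult_le_deriv[of "(deriv ^^ j) f"] diff by simp
  hence "zeros_mult ((deriv ^^ j) f) {0<..} + enat j \<le> zeros_mult ((deriv ^^ Suc j) f) {0<..} + 1 + enat j"
    by (rule add_right_mono)
  also have "\<dots> = zeros_mult ((deriv ^^ Suc j) f) {0<..} + enat (Suc j)"
    by (simp add: one_enat_def add.assoc add.commute)
  finally show ?case using Suc.IH by (rule order.trans[rotated])
qed

lemma zeros_mult_le_of_deriv_funpow_vanishes:
  fixes f :: "real \<Rightarrow> real"
  assumes diff: "\<And>j x. 0 < x \<Longrightarrow> (deriv ^^ j) f differentiable (at x)"
    and vanish: "\<And>x. 0 < x \<Longrightarrow> (deriv ^^ N) f x = 0" and nz: "0 < x0" "f x0 \<noteq> 0"
  shows "zeros_mult f {0<..} \<le> enat N"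
  using vanish
proof (induction N)
  case 0 thus ?case using nz by simp
next
  case (Suc N)
  show ?case
  proof (cases "\<forall>x>0. (deriv ^^ N) f x = 0")
    case True
    thus ?thesis using Suc.IH by (simp add: order.trans)
  next
    case False
    then obtain x1 where x1: "0 < x1" "(deriv ^^ N) f x1 \<noteq> 0" by blast
    have "\<exists>c. \<forall>x\<in>{0<..}. (deriv ^^ N) f x = c"
    proof (rule has_field_derivative_zero_constant)
      fix x :: real assume "x \<in> {0<..}"
      hence x: "0 < x" by simp
      have "DERIV ((deriv ^^ N) f) x :> deriv ((deriv ^^ N) f) x"
        using diff[OF x] DERIV_deriv_iff_real_differentiable by blast
      moreover have "deriv ((deriv ^^ N) f) x = 0" using Suc.prems[OF x] by simp
      ultimately show "((deriv ^^ N) f has_field_derivative 0) (at x within {0<..})"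
        by (metis has_field_derivative_at_within)
    qed simp
    with x1 have "\<forall>x>0. (deriv ^^ N) f x \<noteq> 0" by force
    hence no_zeros: "{x. 0 < x \<and> (deriv ^^ N) f x = 0} = {}" by blast
    have "zeros_mult ((deriv ^^ N) f) {0<..} = 0" unfolding zeros_mult_eq no_zeros by simp
    hence "zeros_mult f {0<..} \<le> enat N"
      using zeros_mult_le_deriv_funpow[OF diff, of N] by simp
    thus ?thesis by (rule order.trans) simp
  qed
qed

lemma zeros_mult_poly_mult:
  fixes Q :: "real poly" and w :: "real \<Rightarrow> real"
  assumes Q: "Q \<noteq> 0" and w: "\<And>s. w s \<noteq> 0" and sw: "smooth_on UNIV w"
  shows "zeros_mult (\<lambda>s. poly Q s * w s) {0<..} \<le> enat (degree Q)"
proof -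
  let ?g = "\<lambda>s. poly Q s * w s"
  let ?Z = "{x. 0 < x \<and> ?g x = 0}"
  have Zsub: "?Z \<subseteq> {x. poly Q x = 0}" using w by auto
  have finR: "finite {x. poly Q x = 0}" by (rule poly_roots_finite[OF Q])
  have finZ: "finite ?Z" by (rule finite_subset[OF Zsub finR])
  have ord: "zero_mult ?g s0 \<le> enat (order s0 Q)" for s0
  proof -
    obtain q where q: "Q = [:- s0, 1:] ^ order s0 Q * q" "\<not> [:- s0, 1:] dvd q"
      using order_decomp[OF Q] by blast
    let ?k = "order s0 Q"
    have q0: "poly q s0 \<noteq> 0" using q(2) poly_eq_0_iff_dvd by blast
    have geq: "?g = (\<lambda>s. (s - s0) ^ ?k * (poly q s * w s))"
      by (subst q(1)) (simp add: poly_power mult.assoc)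
    have su: "smooth_on UNIV (\<lambda>s. (s - s0) ^ ?k)"
      using smooth_on_poly[of UNIV "[:- s0, 1:] ^ ?k"] by (simp add: poly_power)
    have sv: "smooth_on UNIV (\<lambda>s. poly q s * w s)"
      by (rule smooth_on_mult[OF open_UNIV smooth_on_poly sw])
    have "(deriv ^^ ?k) ?g s0 = (deriv ^^ ?k) (\<lambda>s. (s - s0) ^ ?k) s0 * (poly q s0 * w s0)"
      unfolding geq using deriv_funpow_mult_vanishing[OF open_UNIV _ su sv] deriv_funpow_power_shift_at(1)
      by blast
    hence "(deriv ^^ ?k) ?g s0 \<noteq> 0"
      using deriv_funpow_power_shift_at(2)[of ?k s0] q0 w by simp
    thus ?thesis by (rule zero_mult_le_nonzero_deriv)
  qed
  have "(\<Sum>x\<in>?Z. zero_mult ?g x) \<le> (\<Sum>x\<in>?Z. enat (order x Q))"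
    by (rule sum_mono) (rule ord)
  also have "\<dots> = enat (\<Sum>x\<in>?Z. order x Q)" by (simp only: of_nat_eq_enat[symmetric] of_nat_sum)
  also have "(\<Sum>x\<in>?Z. order x Q) \<le> (\<Sum>x | poly Q x = 0. order x Q)"
    by (rule sum_mono2[OF finR Zsub]) simp
  also have "\<dots> \<le> degree Q" by (rule sum_order_le_degree[OF Q])
  finally show ?thesis unfolding zeros_mult_eq using finZ by simp
qed

text \<open>If \<open>\<sigma>' = \<psi> \<circ> \<sigma>\<close>, then \<open>(G \<circ> \<sigma>)\<^sup>(\<^sup>i\<^sup>) = reparam_deriv G \<psi> i \<circ> \<sigma>\<close>.\<close>
primrec reparam_deriv :: "(real \<Rightarrow> real) \<Rightarrow> (real \<Rightarrow> real) \<Rightarrow> nat \<Rightarrow> real \<Rightarrow> real" where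
  "reparam_deriv G \<psi> 0 = G"
| "reparam_deriv G \<psi> (Suc i) = (\<lambda>s. deriv (reparam_deriv G \<psi> i) s * \<psi> s)"

lemma smooth_on_reparam_deriv:
  assumes "smooth_on {0<..} G" "smooth_on {0<..} \<psi>"
  shows "smooth_on {0<..} (reparam_deriv G \<psi> i)"
  by (induction i) (auto intro!: smooth_on_mult smooth_on_deriv assms)

lemma reparam_deriv_nonzero_at_zero_mult:
  assumes sG: "smooth_on {0<..} G" and s\<psi>: "smooth_on {0<..} \<psi>" and \<psi>0: "\<psi> s \<noteq> 0"
    and s: "0 < s" and k: "zero_mult G s = enat k"
  shows "reparam_deriv G \<psi> k s \<noteq> 0"
proof -
  let ?F = "reparam_deriv G \<psi>"
  have "i \<le> k \<longrightarrow> (\<forall>l<k - i. (deriv ^^ l) (?F i) s = 0) \<and> (deriv ^^ (k - i)) (?F i) s \<noteq> 0" for i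
  proof (induction i)
    case 0 thus ?case using zero_mult_enatD[OF k] by simp
  next
    case (Suc i)
    show ?case
    proof
      assume i: "Suc i \<le> k"
      with Suc.IH have IH: "\<forall>l<k - i. (deriv ^^ l) (?F i) s = 0" "(deriv ^^ (k - i)) (?F i) s \<noteq> 0"
        by auto
      have ki: "k - i = Suc (k - Suc i)" using i by simp
      have z: "\<forall>l<k - Suc i. (deriv ^^ l) (deriv (?F i)) s = 0"
        using IH(1) by (metis Suc_less_eq deriv_funpow_Suc ki)
      have nz: "(deriv ^^ (k - Suc i)) (deriv (?F i)) s \<noteq> 0"
        using IH(2) by (metis deriv_funpow_Suc ki)
      note P = deriv_funpow_mult_vanishing[OF open_greaterThan _ smooth_on_deriv[OF smooth_on_reparam_deriv[OF sG s\<psi>]] s\<psi> z]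
      show "(\<forall>l<k - Suc i. (deriv ^^ l) (?F (Suc i)) s = 0) \<and> (deriv ^^ (k - Suc i)) (?F (Suc i)) s \<noteq> 0"
        using P s nz \<psi>0 by simp
    qed
  qed
  from this[of k] show ?thesis by simp
qed

context
  fixes G M \<sigma> \<psi> :: "real \<Rightarrow> real"
  assumes sG: "smooth_on {0<..} G" and s\<psi>: "smooth_on {0<..} \<psi>"
    and \<psi>0: "\<And>s. 0 < s \<Longrightarrow> \<psi> s \<noteq> 0"
    and \<sigma>pos: "\<And>h. 0 < h \<Longrightarrow> 0 < \<sigma> h" and \<sigma>inj: "inj_on \<sigma> {0<..}"
    and \<sigma>der: "\<And>h. 0 < h \<Longrightarrow> DERIV \<sigma> h :> \<psi> (\<sigma> h)"
    and MG: "\<And>h. 0 < h \<Longrightarrow> M h = G (\<sigma> h)"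
begin

lemma deriv_funpow_reparam: "0 < h \<Longrightarrow> (deriv ^^ i) M h = reparam_deriv G \<psi> i (\<sigma> h)"
proof (induction i arbitrary: h)
  case 0 thus ?case using MG by simp
next
  case (Suc i)
  have "(deriv ^^ Suc i) M h = deriv (\<lambda>h. reparam_deriv G \<psi> i (\<sigma> h)) h"
    by (simp, rule deriv_cong_open[of "{0<..}"]) (use Suc in auto)
  also have "\<dots> = deriv (reparam_deriv G \<psi> i) (\<sigma> h) * \<psi> (\<sigma> h)"
    by (rule DERIV_imp_deriv, rule DERIV_chain2[OF smooth_on_DERIV[OF smooth_on_reparam_deriv[OF sG s\<psi>]] \<sigma>der])
       (use Suc.prems \<sigma>pos in auto)
  finally show ?case by simp
qed

lemma zero_mult_reparam_le:
  assumes h: "0 < h"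
  shows "zero_mult M h \<le> zero_mult G (\<sigma> h)"
proof (cases "zero_mult G (\<sigma> h)")
  case (enat k)
  have "reparam_deriv G \<psi> k (\<sigma> h) \<noteq> 0"
    by (rule reparam_deriv_nonzero_at_zero_mult[OF sG s\<psi> \<psi>0[OF \<sigma>pos[OF h]] \<sigma>pos[OF h] enat])
  hence "(deriv ^^ k) M h \<noteq> 0" using deriv_funpow_reparam[OF h] by simp
  thus ?thesis unfolding enat by (rule zero_mult_le_nonzero_deriv)
qed simp

lemma zeros_mult_reparam_le: "zeros_mult M {0<..} \<le> zeros_mult G {0<..}"
proof (cases "finite {s. 0 < s \<and> G s = 0}")
  case False
  thus ?thesis unfolding zeros_mult_eq by simp
next
  case finG: True
  let ?ZM = "{h. 0 < h \<and> M h = 0}" and ?ZG = "{s. 0 < s \<and> G s = 0}"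
  have img: "\<sigma> ` ?ZM \<subseteq> ?ZG" using MG \<sigma>pos by auto
  have injM: "inj_on \<sigma> ?ZM" using \<sigma>inj by (rule inj_on_subset) auto
  have finM: "finite ?ZM" using finite_imageD[OF finite_subset[OF img finG] injM] .
  have "(\<Sum>x\<in>?ZM. zero_mult M x) \<le> (\<Sum>x\<in>?ZM. zero_mult G (\<sigma> x))"
    by (rule sum_mono) (simp add: zero_mult_reparam_le)
  also have "\<dots> = (\<Sum>x\<in>\<sigma> ` ?ZM. zero_mult G x)"
    using sum.reindex[OF injM, of "zero_mult G"] by (simp add: comp_def)
  also have "\<dots> \<le> (\<Sum>x\<in>?ZG. zero_mult G x)" by (rule sum_mono2[OF finG img]) simp
  finally show ?thesis unfolding zeros_mult_eq using finM finG by simp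
qed

end

subsection \<open>Zeros of \<open>P + R \<Theta>\<close> when \<open>\<Theta>'\<close> is rational\<close>

lemma degree_pderiv_funpow: "degree ((pderiv ^^ j) (p :: real poly)) = degree p - j"
  by (induction j) (simp_all add: degree_pderiv)

lemma pderiv_funpow_eq_0: "degree (p :: real poly) < j \<Longrightarrow> (pderiv ^^ j) p = 0"
proof (induction j)
  case 0 thus ?case by simp
next
  case (Suc j)
  show ?case
  proof (cases "degree p < j")
    case True thus ?thesis using Suc.IH by (simp add: pderiv_0)
  next
    case False
    hence "degree ((pderiv ^^ j) p) = 0" using degree_pderiv_funpow[of j p] Suc.prems by simp
    thus ?thesis by (simp add: pderiv_eq_0_iff)
  qed
qed

text \<open>Numerator of the rational part of the \<open>j\<close>-th derivative of \<open>P + R \<Theta>\<close> when \<open>\<Theta>' = K / E\<close>,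
  the denominator being \<open>E\<^sup>j\<close>.\<close>
primrec theta_numer :: "real poly \<Rightarrow> real poly \<Rightarrow> real poly \<Rightarrow> nat \<Rightarrow> real poly" where
  "theta_numer R K E 0 = 0"
| "theta_numer R K E (Suc j) = (pderiv ^^ j) R * K * E ^ j + pderiv (theta_numer R K E j) * E
     - smult (of_nat j) (theta_numer R K E j * pderiv E)"

lemma degree_theta_numer:
  assumes "degree R \<le> d" "degree K \<le> k" "degree E \<le> e"
  shows "degree (theta_numer R K E j) \<le> d + (k + e) * j"
proof (induction j)
  case 0 thus ?case by simp
next
  case (Suc j)
  let ?N = "theta_numer R K E j"
  have "degree ((pderiv ^^ j) R * K * E ^ j) \<le> degree ((pderiv ^^ j) R) + degree K + degree E * j"
    by (meson add_mono degree_mult_le degree_power_le order.trans)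
  also have "\<dots> \<le> d + k + e * j"
    using assms degree_pderiv_funpow[of j R] by (intro add_mono mult_right_mono) auto
  also have "\<dots> \<le> d + (k + e) * Suc j" by (simp add: algebra_simps)
  finally have a: "degree ((pderiv ^^ j) R * K * E ^ j) \<le> d + (k + e) * Suc j" .
  have "degree (pderiv ?N * E) \<le> degree ?N + degree E"
    using degree_mult_le[of "pderiv ?N" E] degree_pderiv[of ?N] by linarith
  hence b: "degree (pderiv ?N * E) \<le> d + (k + e) * Suc j" using Suc.IH assms(3) by simp
  have "degree (smult (of_nat j) (?N * pderiv E)) \<le> degree ?N + degree E"
    using degree_smult_le[of "of_nat j" "?N * pderiv E"] degree_mult_le[of ?N "pderiv E"] degree_pderiv[of E]
    by linarith
  hence c: "degree (smult (of_nat j) (?N * pderiv E)) \<le> d + (k + e) * Suc j" using Suc.IH assms(3) by simp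
  show ?case by (simp only: theta_numer.simps) (intro degree_diff_le degree_add_le a b c)
qed

lemma deriv_funpow_poly_plus_poly_mult:
  fixes P R K E :: "real poly" and \<Theta> :: "real \<Rightarrow> real"
  assumes E: "\<And>s. poly E s \<noteq> 0" and \<Theta>: "\<And>s. DERIV \<Theta> s :> poly K s / poly E s"
  shows "(deriv ^^ j) (\<lambda>s. poly P s + poly R s * \<Theta> s) =
     (\<lambda>s. poly ((pderiv ^^ j) P) s + poly ((pderiv ^^ j) R) s * \<Theta> s + poly (theta_numer R K E j) s / poly E s ^ j)"
proof (induction j)
  case 0 thus ?case by simp
next
  case (Suc j)
  show ?case
  proof (simp only: funpow.simps(2) comp_def Suc.IH, rule ext, rule DERIV_imp_deriv)
    fix s
    let ?Rj = "(pderiv ^^ j) R" and ?N = "theta_numer R K E j"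
    have d: "DERIV (\<lambda>s. poly ((pderiv ^^ j) P) s + poly ?Rj s * \<Theta> s + poly ?N s / poly E s ^ j) s :>
      poly (pderiv ((pderiv ^^ j) P)) s + (poly ?Rj s * (poly K s / poly E s) + poly (pderiv ?Rj) s * \<Theta> s)
        + poly (pderiv ?N * E - smult (of_nat j) (?N * pderiv E)) s / poly E s ^ Suc j"
      by (intro DERIV_add DERIV_mult' poly_DERIV \<Theta> DERIV_poly_quot E)
    have eq: "poly ?Rj s * (poly K s / poly E s) = poly (?Rj * K * E ^ j) s / poly E s ^ Suc j"
      using E[of s] by (simp add: field_simps)
    show "DERIV (\<lambda>s. poly ((pderiv ^^ j) P) s + poly ?Rj s * \<Theta> s + poly ?N s / poly E s ^ j) s :>
      poly (pderiv ((pderiv ^^ j) P)) s + poly (pderiv ((pderiv ^^ j) R)) s * \<Theta> s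
        + poly (theta_numer R K E (Suc j)) s / poly E s ^ Suc j"
    proof (rule DERIV_cong[OF d])
      have "poly (theta_numer R K E (Suc j)) s / poly E s ^ Suc j = poly (?Rj * K * E ^ j) s / poly E s ^ Suc j
          + poly (pderiv ?N * E - smult (of_nat j) (?N * pderiv E)) s / poly E s ^ Suc j"
        by (simp only: theta_numer.simps poly_add poly_diff add_divide_distrib diff_divide_distrib)
      thus "poly (pderiv ((pderiv ^^ j) P)) s + (poly ?Rj s * (poly K s / poly E s) + poly (pderiv ?Rj) s * \<Theta> s)
        + poly (pderiv ?N * E - smult (of_nat j) (?N * pderiv E)) s / poly E s ^ Suc j =
        poly (pderiv ((pderiv ^^ j) P)) s + poly (pderiv ((pderiv ^^ j) R)) s * \<Theta> s
        + poly (theta_numer R K E (Suc j)) s / poly E s ^ Suc j"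
        unfolding eq by simp
    qed
  qed
qed

lemma smooth_on_poly_plus_poly_mult:
  fixes P R K E :: "real poly" and \<Theta> :: "real \<Rightarrow> real"
  assumes E: "\<And>s. poly E s \<noteq> 0" and \<Theta>: "\<And>s. DERIV \<Theta> s :> poly K s / poly E s"
  shows "smooth_on UNIV (\<lambda>s. poly P s + poly R s * \<Theta> s)"
  unfolding smooth_on_iff deriv_funpow_poly_plus_poly_mult[OF E \<Theta>] real_differentiable_def
proof (intro allI ballI exI)
  fix j and x :: real
  show "DERIV (\<lambda>s. poly ((pderiv ^^ j) P) s + poly ((pderiv ^^ j) R) s * \<Theta> s
      + poly (theta_numer R K E j) s / poly E s ^ j) x :>
    poly (pderiv ((pderiv ^^ j) P)) x
      + (poly ((pderiv ^^ j) R) x * (poly K x / poly E x) + poly (pderiv ((pderiv ^^ j) R)) x * \<Theta> x)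
      + poly (pderiv (theta_numer R K E j) * E - smult (of_nat j) (theta_numer R K E j * pderiv E)) x
        / poly E x ^ Suc j"
    by (intro DERIV_add DERIV_mult' poly_DERIV \<Theta> DERIV_poly_quot E)
qed

text \<open>The \<open>(d+1)\<close>-st derivative kills \<open>P\<close> and \<open>R\<close> and leaves a rational function whose numerator
  has degree at most \<open>d + (k + e)(d + 1)\<close>; Rolle's theorem adds at most \<open>d + 1\<close> zeros back.\<close>
lemma zeros_mult_poly_plus_poly_mult:
  fixes P R K E :: "real poly" and \<Theta> :: "real \<Rightarrow> real"
  assumes E: "\<And>s. poly E s \<noteq> 0" and \<Theta>: "\<And>s. DERIV \<Theta> s :> poly K s / poly E s"
    and dP: "degree P \<le> d" and dR: "degree R \<le> d" and dK: "degree K \<le> k" and dE: "degree E \<le> e"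
    and nz: "0 < s0" "poly P s0 + poly R s0 * \<Theta> s0 \<noteq> 0"
  shows "zeros_mult (\<lambda>s. poly P s + poly R s * \<Theta> s) {0<..} \<le> enat (d + (k + e) * (d + 1) + (d + 1))"
proof -
  define G where "G = (\<lambda>s. poly P s + poly R s * \<Theta> s)"
  let ?Q = "theta_numer R K E (d + 1)"
  have diff: "(deriv ^^ j) G differentiable (at x)" for j x
    using smooth_on_poly_plus_poly_mult[OF E \<Theta>] unfolding G_def smooth_on_iff by blast
  have GN: "(deriv ^^ (d + 1)) G = (\<lambda>s. poly ?Q s / poly E s ^ (d + 1))"
    unfolding G_def deriv_funpow_poly_plus_poly_mult[OF E \<Theta>]
    using pderiv_funpow_eq_0[of P "d + 1"] pderiv_funpow_eq_0[of R "d + 1"] dP dR by simp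
  show ?thesis
  proof (cases "?Q = 0")
    case False
    have "smooth_on UNIV (\<lambda>s. poly 1 s / poly E s ^ (d + 1))" by (rule smooth_on_poly_quot) (use E in auto)
    hence "zeros_mult (\<lambda>s. poly ?Q s * (poly 1 s / poly E s ^ (d + 1))) {0<..} \<le> enat (degree ?Q)"
      by (intro zeros_mult_poly_mult False) (use E in simp_all)
    also have "enat (degree ?Q) \<le> enat (d + (k + e) * (d + 1))"
      by (simp only: enat_ord_simps) (rule degree_theta_numer[OF dR dK dE])
    finally have "zeros_mult ((deriv ^^ (d + 1)) G) {0<..} \<le> enat (d + (k + e) * (d + 1))"
      unfolding GN by simp
    hence "zeros_mult ((deriv ^^ (d + 1)) G) {0<..} + enat (d + 1) \<le> enat (d + (k + e) * (d + 1) + (d + 1))"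
      by (metis add_right_mono plus_enat_simps(1))
    with zeros_mult_le_deriv_funpow[OF diff, of "d + 1"] show ?thesis
      unfolding G_def by (rule order.trans)
  next
    case True
    have vanish: "(deriv ^^ (d + 1)) G x = 0" for x unfolding GN True by simp
    have "G s0 \<noteq> 0" using nz(2) unfolding G_def .
    hence "zeros_mult G {0<..} \<le> enat (d + 1)"
      by (rule zeros_mult_le_of_deriv_funpow_vanishes[OF diff vanish nz(1)])
    also have "enat (d + 1) \<le> enat (d + (k + e) * (d + 1) + (d + 1))" by simp
    finally show ?thesis unfolding G_def .
  qed
qed
subsection \<open>Trigonometric polynomials and their antiderivatives\<close>

text \<open>Combinations of \<open>cos\<^sup>a t sin\<^sup>b t\<close> with \<open>a + b \<le> d\<close> and \<open>a + b \<equiv> d (mod 2)\<close>; multiplied by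
  \<open>r\<^sup>d\<close> they become polynomials in \<open>r cos t\<close>, \<open>r sin t\<close> and \<open>r\<^sup>2\<close>.\<close>
inductive trig_poly :: "nat \<Rightarrow> (real \<Rightarrow> real) \<Rightarrow> bool" for d where
  zero: "trig_poly d (\<lambda>t. 0)"
| monom: "a + b \<le> d \<Longrightarrow> even (a + b + d) \<Longrightarrow> trig_poly d (\<lambda>t. c * cos t ^ a * sin t ^ b)"
| add: "trig_poly d f \<Longrightarrow> trig_poly d g \<Longrightarrow> trig_poly d (\<lambda>t. f t + g t)"

lemma trig_poly_scale: "trig_poly d f \<Longrightarrow> trig_poly d (\<lambda>t. c * f t)"
proof (induction rule: trig_poly.induct)
  case zero thus ?case using trig_poly.zero by simp
next
  case (monom a b c')
  have "trig_poly d (\<lambda>t. (c * c') * cos t ^ a * sin t ^ b)" by (rule trig_poly.monom[OF monom])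
  thus ?case by (simp add: mult.assoc)
next
  case (add f g)
  have "trig_poly d (\<lambda>t. c * f t + c * g t)" by (rule trig_poly.add[OF add.IH])
  thus ?case by (simp add: distrib_left)
qed

lemma trig_poly_periodic: "trig_poly d g \<Longrightarrow> g (x - 2 * pi) = g x"
  by (induction rule: trig_poly.induct) (auto simp: cos_diff sin_diff)

text \<open>\<open>f = g' + c\<close> with \<open>g\<close> a trigonometric polynomial of the same type and \<open>c\<close> constant; for odd \<open>d\<close>
  the function \<open>f\<close> changes sign under \<open>t \<mapsto> t + \<pi>\<close>, so its mean \<open>c\<close> vanishes.\<close>
definition has_trig_antideriv :: "nat \<Rightarrow> (real \<Rightarrow> real) \<Rightarrow> bool" where
  "has_trig_antideriv d f \<longleftrightarrow> (\<exists>c g. trig_poly d g \<and> (odd d \<longrightarrow> c = 0) \<and> (\<forall>t. DERIV g t :> f t - c))"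

lemma has_trig_antideriv_reduction:
  assumes h: "has_trig_antideriv d h" and u: "trig_poly d u"
    and du: "\<And>t. DERIV u t :> \<alpha> * h t - \<beta> * f t" and \<beta>: "\<beta> \<noteq> 0"
  shows "has_trig_antideriv d f"
proof -
  obtain c g where g: "trig_poly d g" "odd d \<longrightarrow> c = 0" "\<forall>t. DERIV g t :> h t - c"
    using h unfolding has_trig_antideriv_def by blast
  let ?G = "\<lambda>t. \<alpha> / \<beta> * g t + (- 1 / \<beta>) * u t"
  have "DERIV ?G t :> \<alpha> / \<beta> * (h t - c) + (- 1 / \<beta>) * (\<alpha> * h t - \<beta> * f t)" for t
    by (intro DERIV_add DERIV_cmult g(3)[rule_format] du)
  moreover have "\<alpha> / \<beta> * (h t - c) + (- 1 / \<beta>) * (\<alpha> * h t - \<beta> * f t) = f t - \<alpha> / \<beta> * c" for t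
    using \<beta> by (simp add: field_simps)
  ultimately have "\<forall>t. DERIV ?G t :> f t - \<alpha> / \<beta> * c" by simp
  moreover have "trig_poly d ?G" by (intro trig_poly.add trig_poly_scale g(1) u)
  ultimately show ?thesis unfolding has_trig_antideriv_def using g(2)
    by (intro exI[of _ "\<alpha> / \<beta> * c"] exI[of _ ?G]) simp
qed

lemma DERIV_cos_pow_sin_pow:
  "DERIV (\<lambda>t. cos t ^ (a + 1) * sin t ^ (b + 1)) t :>
     real (b + 1) * (cos t ^ a * sin t ^ b) - real (a + b + 2) * (cos t ^ a * sin t ^ (b + 2))"
proof -
  have c2: "cos t ^ 2 = 1 - sin t ^ 2" by (simp add: cos_squared_eq)
  have "DERIV (\<lambda>t. cos t ^ (a + 1) * sin t ^ (b + 1)) t :>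
      real (b + 1) * (cos t ^ a * sin t ^ b) * cos t ^ 2 - real (a + 1) * (cos t ^ a * sin t ^ (b + 2))"
    by (rule DERIV_cong, (rule derivative_eq_intros refl)+) (simp add: power2_eq_square algebra_simps)
  thus ?thesis unfolding c2 by (simp add: power_add power2_eq_square algebra_simps)
qed

lemma DERIV_cos_pow_sin:
  "DERIV (\<lambda>t. cos t ^ (a + 1) * sin t) t :> real (a + 2) * cos t ^ (a + 2) - real (a + 1) * cos t ^ a"
proof -
  have "cos t ^ a * sin t ^ 2 = cos t ^ a * (1 - cos t ^ 2)" by (simp add: sin_squared_eq)
  hence s2: "cos t ^ a * sin t ^ 2 = cos t ^ a - cos t ^ (a + 2)"
    by (simp only: power_add right_diff_distrib mult_1_right)
  show ?thesis
    using DERIV_cos_pow_sin_pow[of a 0 t]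
    unfolding add_0 add_0_right power_0 mult_1_right s2 by (simp add: algebra_simps)
qed

lemma has_trig_antideriv_monom:
  "a + b \<le> d \<Longrightarrow> even (a + b + d) \<Longrightarrow> has_trig_antideriv d (\<lambda>t. cos t ^ a * sin t ^ b)"
proof (induction "a + b" arbitrary: a b rule: less_induct)
  case less
  consider (ab0) "a = 0" "b = 0" | (a1) "a = 1" "b = 0" | (a2) a' where "a = a' + 2" "b = 0"
    | (b1) "b = 1" | (b2) b' where "b = b' + 2"
  proof -
    have "a = 0 \<or> a = 1 \<or> (\<exists>a'. a = a' + 2)" "b = 0 \<or> b = 1 \<or> (\<exists>b'. b = b' + 2)" by presburger+
    thus thesis using that by blast
  qed
  thus ?case
  proof cases
    case ab0
    have "DERIV (\<lambda>t. 0) t :> cos t ^ a * sin t ^ b - 1" for t using ab0 by simp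
    thus ?thesis unfolding has_trig_antideriv_def using less.prems ab0
      by (intro exI[of _ 1] exI[of _ "\<lambda>t. 0"]) (simp add: trig_poly.zero)
  next
    case a1
    have "trig_poly d (\<lambda>t. 1 * cos t ^ 0 * sin t ^ 1)" by (rule trig_poly.monom) (use less.prems a1 in auto)
    moreover have "DERIV sin t :> cos t ^ a * sin t ^ b - 0" for t using a1 by (auto intro!: derivative_eq_intros)
    ultimately show ?thesis unfolding has_trig_antideriv_def by (intro exI[of _ 0] exI[of _ sin]) auto
  next
    case b1
    let ?g = "\<lambda>t. (- 1 / real (a + 1)) * cos t ^ (a + 1) * sin t ^ 0"
    have "trig_poly d ?g" by (rule trig_poly.monom) (use less.prems b1 in auto)
    moreover have "DERIV ?g t :> cos t ^ a * sin t ^ b - 0" for t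
      by (rule DERIV_cong, (rule derivative_eq_intros refl)+) (use b1 in \<open>simp add: field_simps\<close>)
    ultimately show ?thesis unfolding has_trig_antideriv_def by (intro exI[of _ 0] exI[of _ ?g]) simp
  next
    case (a2 a')
    show ?thesis
    proof (rule has_trig_antideriv_reduction)
      show "has_trig_antideriv d (\<lambda>t. cos t ^ a' * sin t ^ 0)"
        using less.hyps[of a' 0] less.prems a2 by simp
      have "trig_poly d (\<lambda>t. 1 * cos t ^ (a' + 1) * sin t ^ 1)" by (rule trig_poly.monom) (use less.prems a2 in auto)
      thus "trig_poly d (\<lambda>t. cos t ^ (a' + 1) * sin t)" by simp
      show "DERIV (\<lambda>t. cos t ^ (a' + 1) * sin t) t :>
          - real (a' + 1) * (cos t ^ a' * sin t ^ 0) - (- real (a' + 2)) * (cos t ^ a * sin t ^ b)" for t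
        by (rule DERIV_cong[OF DERIV_cos_pow_sin[of a' t]]) (simp add: a2 algebra_simps)
    qed simp
  next
    case (b2 b')
    show ?thesis
    proof (rule has_trig_antideriv_reduction)
      show "has_trig_antideriv d (\<lambda>t. cos t ^ a * sin t ^ b')"
        using less.hyps[of a b'] less.prems b2 by simp
      have "trig_poly d (\<lambda>t. 1 * cos t ^ (a + 1) * sin t ^ (b' + 1))"
        by (rule trig_poly.monom) (use less.prems b2 in auto)
      thus "trig_poly d (\<lambda>t. cos t ^ (a + 1) * sin t ^ (b' + 1))" by simp
      show "DERIV (\<lambda>t. cos t ^ (a + 1) * sin t ^ (b' + 1)) t :>
          real (b' + 1) * (cos t ^ a * sin t ^ b') - real (a + b' + 2) * (cos t ^ a * sin t ^ b)" for t
        using DERIV_cos_pow_sin_pow[of a b' t] b2 by simp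
    qed simp
  qed
qed

lemma trig_poly_eval:
  fixes X Y H :: "real poly" and r \<theta> :: "real \<Rightarrow> real"
  assumes "trig_poly k g"
    and polar: "\<And>s. s \<in> S \<Longrightarrow> r s * cos (\<theta> s) = poly X s \<and> r s * sin (\<theta> s) = poly Y s \<and> r s ^ 2 = poly H s"
    and dX: "degree X \<le> 1" and dY: "degree Y \<le> m" and dH: "degree H \<le> 2 * m" and m: "1 \<le> m"
  shows "\<exists>P. degree P \<le> m * k \<and> (\<forall>s\<in>S. r s ^ k * g (\<theta> s) = poly P s)"
  using assms(1)
proof (induction rule: trig_poly.induct)
  case zero thus ?case by (intro exI[of _ 0]) auto
next
  case (monom a b c)
  obtain q where q: "k = a + b + 2 * q" using monom
    by (metis add_diff_inverse_nat evenE le_add_diff_inverse not_less even_add)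
  define P where "P = smult c (X ^ a * Y ^ b * H ^ q)"
  have "degree P \<le> degree X * a + degree Y * b + degree H * q"
    unfolding P_def by (meson add_mono degree_mult_le degree_power_le degree_smult_le order.trans)
  also have "\<dots> \<le> 1 * a + m * b + (2 * m) * q" using dX dY dH by (intro add_mono mult_right_mono) auto
  also have "\<dots> \<le> m * k" using m unfolding q by (simp add: algebra_simps)
  finally have dP: "degree P \<le> m * k" .
  have "r s ^ k * (c * cos (\<theta> s) ^ a * sin (\<theta> s) ^ b) = poly P s" if s: "s \<in> S" for s
  proof -
    have "r s ^ k * (c * cos (\<theta> s) ^ a * sin (\<theta> s) ^ b)
        = c * (r s * cos (\<theta> s)) ^ a * (r s * sin (\<theta> s)) ^ b * (r s ^ 2) ^ q"
      using power_mult[of "r s" 2 q] power_mult[of "r s" q 2]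
      unfolding q by (simp add: power_add power_mult_distrib mult.commute algebra_simps)
    also have "\<dots> = poly P s" using polar[OF s] by (simp add: P_def poly_power)
    finally show ?thesis .
  qed
  thus ?case using dP by blast
next
  case (add f g)
  obtain P1 where 1: "degree P1 \<le> m * k" "\<forall>s\<in>S. r s ^ k * f (\<theta> s) = poly P1 s" using add.IH(1) by blast
  obtain P2 where 2: "degree P2 \<le> m * k" "\<forall>s\<in>S. r s ^ k * g (\<theta> s) = poly P2 s" using add.IH(2) by blast
  show ?case using 1 2 by (intro exI[of _ "P1 + P2"]) (auto intro: degree_add_le simp: distrib_left)
qed

subsection \<open>The Melnikov function in the parameter \<open>s\<close>\<close>

text \<open>With \<open>h = s\<^sup>2 + s\<^sup>2\<^sup>m\<close>, the points \<open>B\<^sub>h = (s, s\<^sup>m)\<close> and \<open>A\<^sub>h = (-s, (-s)\<^sup>m)\<close> have polar angles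
  \<open>angle_B m s\<close> and \<open>angle_A m s\<close>, and \<open>L\<^sub>h\<^sup>+\<close> has opening angle \<open>arc_angle m s\<close>.\<close>
definition level_poly :: "nat \<Rightarrow> real poly" where
  "level_poly m = [:0, 0, 1:] + monom 1 (2 * m)"

definition angle_B :: "nat \<Rightarrow> real \<Rightarrow> real" where
  "angle_B m s = arctan (s ^ (m - 1))"

definition angle_A :: "nat \<Rightarrow> real \<Rightarrow> real" where
  "angle_A m s = pi + arctan ((- s) ^ (m - 1))"

definition arc_angle :: "nat \<Rightarrow> real \<Rightarrow> real" where
  "arc_angle m s = angle_A m s - angle_B m s"

lemma poly_level_poly: "poly (level_poly m) s = s ^ 2 + s ^ (2 * m)"
  by (simp add: level_poly_def poly_monom power2_eq_square)

lemma degree_level_poly: "1 \<le> m \<Longrightarrow> degree (level_poly m) \<le> 2 * m"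
  unfolding level_poly_def by (intro degree_add_le) (auto intro: order.trans[OF degree_monom_le])

lemma arc_angle_bounds: "0 < arc_angle m s" "arc_angle m s < 2 * pi"
  using arctan_bounded[of "(- s) ^ (m - 1)"] arctan_bounded[of "s ^ (m - 1)"]
  by (auto simp: arc_angle_def angle_A_def angle_B_def)

lemma polar_coords_A_B:
  assumes m: "1 \<le> m" and s: "0 < s"
  defines "r \<equiv> sqrt (s ^ 2 + s ^ (2 * m))"
  shows "r * cos (angle_B m s) = s" "r * sin (angle_B m s) = s ^ m"
    "r * cos (angle_A m s) = - s" "r * sin (angle_A m s) = (- s) ^ m"
proof -
  define w where "w = s ^ (m - 1)"
  define v where "v = (- s) ^ (m - 1)"
  define q where "q = sqrt (1 + w ^ 2)"
  have q0: "0 < q" unfolding q_def by (simp add: add_pos_nonneg)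
  have vw: "v ^ 2 = w ^ 2"
    unfolding v_def w_def by (simp add: power_mult_distrib[symmetric] power_mult[symmetric] mult.commute)
  have sm: "s ^ m = s * w" and msm: "(- s) ^ m = (- s) * v"
    unfolding w_def v_def using m by (metis Suc_diff_le diff_Suc_1 power_Suc)+
  have "s ^ (2 * m) = (s ^ m) ^ 2" by (simp add: power_mult[symmetric] mult.commute)
  hence "s ^ 2 + s ^ (2 * m) = (s * q) ^ 2" unfolding sm q_def by (simp add: power_mult_distrib algebra_simps)
  hence rq: "r = s * q" unfolding r_def using s q0 by simp
  have qv: "sqrt (1 + v ^ 2) = q" unfolding q_def vw ..
  show "r * cos (angle_B m s) = s" "r * sin (angle_B m s) = s ^ m"
    unfolding rq angle_B_def cos_arctan sin_arctan w_def[symmetric] q_def[symmetric] sm using q0 by simp_all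
  show "r * cos (angle_A m s) = - s" "r * sin (angle_A m s) = (- s) ^ m"
    unfolding rq angle_A_def cos_periodic_pi2 sin_periodic_pi2 cos_arctan sin_arctan v_def[symmetric] qv msm
    using q0 by simp_all
qed

definition arc_integral_form ::
  "nat \<Rightarrow> nat \<Rightarrow> (real \<Rightarrow> real \<Rightarrow> real) \<Rightarrow> (real \<Rightarrow> real set) \<Rightarrow> bool" where
  "arc_integral_form m D g I \<longleftrightarrow> (\<exists>P R. degree P \<le> D \<and> degree R \<le> D \<and>
     (\<forall>s>0. (g s has_integral poly P s + poly R s * arc_angle m s) (I s)))"

lemma arc_integral_form_mono:
  "arc_integral_form m D g I \<Longrightarrow> D \<le> D' \<Longrightarrow> arc_integral_form m D' g I"
  unfolding arc_integral_form_def by (meson order.trans)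

lemma arc_integral_form_add:
  assumes "arc_integral_form m D f I" "arc_integral_form m D g I"
  shows "arc_integral_form m D (\<lambda>s t. f s t + g s t) I"
proof -
  obtain P1 R1 where 1: "degree P1 \<le> D" "degree R1 \<le> D"
    "\<And>s. 0 < s \<Longrightarrow> (f s has_integral poly P1 s + poly R1 s * arc_angle m s) (I s)"
    using assms(1) unfolding arc_integral_form_def by blast
  obtain P2 R2 where 2: "degree P2 \<le> D" "degree R2 \<le> D"
    "\<And>s. 0 < s \<Longrightarrow> (g s has_integral poly P2 s + poly R2 s * arc_angle m s) (I s)"
    using assms(2) unfolding arc_integral_form_def by blast
  have "((\<lambda>t. f s t + g s t) has_integral poly (P1 + P2) s + poly (R1 + R2) s * arc_angle m s) (I s)"
    if "0 < s" for s
    using has_integral_add[OF 1(3)[OF that] 2(3)[OF that]] by (simp add: algebra_simps)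
  with 1(1,2) 2(1,2) show ?thesis unfolding arc_integral_form_def
    by (intro exI[of _ "P1 + P2"] exI[of _ "R1 + R2"]) (auto intro: degree_add_le)
qed

lemma arc_integral_form_cmult:
  assumes "arc_integral_form m D g I"
  shows "arc_integral_form m D (\<lambda>s t. c * g s t) I"
proof -
  obtain P R where PR: "degree P \<le> D" "degree R \<le> D"
    "\<And>s. 0 < s \<Longrightarrow> (g s has_integral poly P s + poly R s * arc_angle m s) (I s)"
    using assms unfolding arc_integral_form_def by blast
  have "((\<lambda>t. c * g s t) has_integral poly (smult c P) s + poly (smult c R) s * arc_angle m s) (I s)"
    if "0 < s" for s
    using has_integral_mult_right[OF PR(3)[OF that], of c] by (simp add: algebra_simps)
  with PR(1,2) show ?thesis unfolding arc_integral_form_def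
    by (intro exI[of _ "smult c P"] exI[of _ "smult c R"]) (auto intro: order.trans[OF degree_smult_le])
qed

lemma arc_integral_form_sum:
  assumes "finite A" "\<And>i. i \<in> A \<Longrightarrow> arc_integral_form m D (g i) I"
  shows "arc_integral_form m D (\<lambda>s t. \<Sum>i\<in>A. g i s t) I"
  using assms
proof (induction A rule: finite_induct)
  case empty
  show ?case unfolding arc_integral_form_def by (intro exI[of _ 0]) auto
next
  case (insert i A)
  thus ?case by (simp add: arc_integral_form_add)
qed

lemma has_integral_antideriv_shift:
  fixes f g :: "real \<Rightarrow> real"
  assumes "\<And>t. DERIV g t :> f t - c" "\<beta> \<le> \<alpha>"
  shows "((\<lambda>t. r * f t) has_integral (r * g \<alpha> - r * g \<beta> + r * c * (\<alpha> - \<beta>))) {\<beta>..\<alpha>}"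
proof -
  let ?F = "\<lambda>t. r * g t + r * c * t"
  have "DERIV ?F t :> r * (f t - c) + r * c * 1" for t
    by (intro DERIV_add DERIV_cmult assms(1) DERIV_ident)
  hence "(?F has_vector_derivative r * f t) (at t within {\<beta>..\<alpha>})" for t
    by (simp add: algebra_simps has_real_derivative_iff_has_vector_derivative[symmetric] has_field_derivative_at_within)
  from fundamental_theorem_of_calculus[OF assms(2) this] show ?thesis by (simp add: algebra_simps)
qed

lemma trig_poly_eval_at_arc_ends:
  assumes m: "1 \<le> m" and g: "trig_poly k g"
  shows "\<exists>P. degree P \<le> m * k \<and> (\<forall>s\<in>{0<..}. sqrt (s ^ 2 + s ^ (2 * m)) ^ k * g (angle_A m s) = poly P s)"
    and "\<exists>P. degree P \<le> m * k \<and> (\<forall>s\<in>{0<..}. sqrt (s ^ 2 + s ^ (2 * m)) ^ k * g (angle_B m s) = poly P s)"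
proof -
  let ?r = "\<lambda>s. sqrt (s ^ 2 + s ^ (2 * m))"
  have r2: "?r s ^ 2 = poly (level_poly m) s" if "0 < s" for s
    using that by (simp add: poly_level_poly)
  have polar: "?r s * cos (angle_B m s) = s" "?r s * sin (angle_B m s) = s ^ m"
      "?r s * cos (angle_A m s) = - s" "?r s * sin (angle_A m s) = (- s) ^ m" if "0 < s" for s
    using polar_coords_A_B[OF m that] by simp_all
  have dY: "degree ([:0, c:] ^ m) \<le> m" for c :: real
    using degree_power_le[of "[:0, c:]" m] by (cases "c = 0") auto
  note eval = trig_poly_eval[OF g _ _ dY degree_level_poly[OF m] m, of "{0<..}" ?r]
  have "?r s * cos (angle_A m s) = poly [:0, -1:] s \<and> ?r s * sin (angle_A m s) = poly ([:0, -1:] ^ m) s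
      \<and> ?r s ^ 2 = poly (level_poly m) s" if "s \<in> {0<..}" for s
    using that by (intro conjI r2) (simp_all add: poly_power polar)
  thus "\<exists>P. degree P \<le> m * k \<and> (\<forall>s\<in>{0<..}. ?r s ^ k * g (angle_A m s) = poly P s)"
    by (rule eval) auto
  have "?r s * cos (angle_B m s) = poly [:0, 1:] s \<and> ?r s * sin (angle_B m s) = poly ([:0, 1:] ^ m) s
      \<and> ?r s ^ 2 = poly (level_poly m) s" if "s \<in> {0<..}" for s
    using that by (intro conjI r2) (simp_all add: poly_power polar)
  thus "\<exists>P. degree P \<le> m * k \<and> (\<forall>s\<in>{0<..}. ?r s ^ k * g (angle_B m s) = poly P s)"
    by (rule eval) auto
qed

text \<open>On each arc, \<open>r\<^sup>a\<^sup>+\<^sup>b cos\<^sup>a t sin\<^sup>b t\<close> integrates to \<open>r\<^sup>a\<^sup>+\<^sup>b (g(\<alpha>) - g(\<beta>) + c (\<alpha> - \<beta>))\<close> with \<open>g\<close> a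
  trigonometric polynomial.\<close>
lemma arc_integral_form_monom:
  fixes a b :: nat
  assumes m: "1 \<le> m"
  defines "g \<equiv> \<lambda>s t. sqrt (s ^ 2 + s ^ (2 * m)) ^ (a + b) * (cos t ^ a * sin t ^ b)"
  shows "arc_integral_form m (m * (a + b)) g (\<lambda>s. {angle_B m s..angle_A m s})"
    and "arc_integral_form m (m * (a + b)) g (\<lambda>s. {angle_A m s - 2 * pi..angle_B m s})"
proof -
  let ?k = "a + b" and ?r = "\<lambda>s. sqrt (s ^ 2 + s ^ (2 * m))"
  have "has_trig_antideriv ?k (\<lambda>t. cos t ^ a * sin t ^ b)" by (rule has_trig_antideriv_monom) auto
  then obtain c G where G: "trig_poly ?k G" "odd ?k \<longrightarrow> c = 0" "\<forall>t. DERIV G t :> cos t ^ a * sin t ^ b - c"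
    unfolding has_trig_antideriv_def by blast
  have const: "trig_poly ?k (\<lambda>t. c)"
  proof (cases "even ?k")
    case True
    from trig_poly.monom[of 0 0 ?k c] True show ?thesis by simp
  qed (use G(2) trig_poly.zero in auto)
  obtain PA where PA: "degree PA \<le> m * ?k" "\<forall>s\<in>{0<..}. ?r s ^ ?k * G (angle_A m s) = poly PA s"
    using trig_poly_eval_at_arc_ends(1)[OF m G(1)] by blast
  obtain PB where PB: "degree PB \<le> m * ?k" "\<forall>s\<in>{0<..}. ?r s ^ ?k * G (angle_B m s) = poly PB s"
    using trig_poly_eval_at_arc_ends(2)[OF m G(1)] by blast
  obtain C where C: "degree C \<le> m * ?k" "\<forall>s\<in>{0<..}. ?r s ^ ?k * c = poly C s"
    using trig_poly_eval_at_arc_ends(2)[OF m const] by blast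
  have I: "(g s has_integral ?r s ^ ?k * G \<alpha> - ?r s ^ ?k * G \<beta> + ?r s ^ ?k * c * (\<alpha> - \<beta>)) {\<beta>..\<alpha>}"
    if "\<beta> \<le> \<alpha>" for s \<alpha> \<beta>
    unfolding g_def by (rule has_integral_antideriv_shift[OF G(3)[rule_format] that])
  have upper: "(g s has_integral poly (PA - PB) s + poly C s * arc_angle m s) {angle_B m s..angle_A m s}"
    if s: "0 < s" for s
  proof -
    have "angle_B m s \<le> angle_A m s" using arc_angle_bounds(1)[of m s] by (simp add: arc_angle_def)
    from I[OF this, of s]
    have "(g s has_integral poly PA s - poly PB s + poly C s * (angle_A m s - angle_B m s))
        {angle_B m s..angle_A m s}"
      using PA(2) PB(2) C(2) s by simp
    thus ?thesis by (simp add: arc_angle_def)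
  qed
  have lower: "(g s has_integral poly (PB - PA + smult (2 * pi) C) s + poly (- C) s * arc_angle m s)
      {angle_A m s - 2 * pi..angle_B m s}" if s: "0 < s" for s
  proof -
    have "angle_A m s - 2 * pi \<le> angle_B m s" using arc_angle_bounds(2)[of m s] by (simp add: arc_angle_def)
    from I[OF this, of s]
    have "(g s has_integral poly PB s - poly PA s + poly C s * (angle_B m s - (angle_A m s - 2 * pi)))
        {angle_A m s - 2 * pi..angle_B m s}"
      using PA(2) PB(2) C(2) s trig_poly_periodic[OF G(1), of "angle_A m s"] by simp
    thus ?thesis by (simp add: arc_angle_def algebra_simps)
  qed
  show "arc_integral_form m (m * ?k) g (\<lambda>s. {angle_B m s..angle_A m s})"
    unfolding arc_integral_form_def using upper PA(1) PB(1) C(1)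
    by (intro exI[of _ "PA - PB"] exI[of _ C]) (auto intro: degree_diff_le)
  show "arc_integral_form m (m * ?k) g (\<lambda>s. {angle_A m s - 2 * pi..angle_B m s})"
    unfolding arc_integral_form_def using lower PA(1) PB(1) C(1)
    by (intro exI[of _ "PB - PA + smult (2 * pi) C"] exI[of _ "- C"])
       (auto intro!: degree_add_le degree_diff_le order.trans[OF degree_smult_le])
qed
lemma cw_integrand_eq_monom_sum:
  fixes r t :: real
  shows "poly2 n q (r * cos t) (r * sin t) * (r * sin t) + poly2 n p (r * cos t) (r * sin t) * (r * cos t) =
    (\<Sum>i\<le>n. \<Sum>j\<le>n - i. q i j * (r ^ (i + Suc j) * (cos t ^ i * sin t ^ Suc j))
                       + p i j * (r ^ (Suc i + j) * (cos t ^ Suc i * sin t ^ j)))"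
proof -
  have "poly2 n q (r * cos t) (r * sin t) * (r * sin t)
      = (\<Sum>i\<le>n. \<Sum>j\<le>n - i. q i j * (r ^ (i + Suc j) * (cos t ^ i * sin t ^ Suc j)))"
    unfolding poly2_def sum_distrib_right
    by (intro sum.cong refl) (simp add: power_mult_distrib power_add algebra_simps)
  moreover have "poly2 n p (r * cos t) (r * sin t) * (r * cos t)
      = (\<Sum>i\<le>n. \<Sum>j\<le>n - i. p i j * (r ^ (Suc i + j) * (cos t ^ Suc i * sin t ^ j)))"
    unfolding poly2_def sum_distrib_right
    by (intro sum.cong refl) (simp add: power_mult_distrib power_add algebra_simps)
  ultimately show ?thesis by (simp add: sum.distrib)
qed

lemma arc_integral_form_cw_integrand:
  assumes monom: "\<And>a b. a + b \<le> Suc n \<Longrightarrow>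
      arc_integral_form m D (\<lambda>s t. r s ^ (a + b) * (cos t ^ a * sin t ^ b)) I"
  shows "arc_integral_form m D (\<lambda>s t. poly2 n q (r s * cos t) (r s * sin t) * (r s * sin t)
      + poly2 n p (r s * cos t) (r s * sin t) * (r s * cos t)) I"
  unfolding cw_integrand_eq_monom_sum
  by (intro arc_integral_form_sum arc_integral_form_add arc_integral_form_cmult finite_atMost monom) auto

lemma sol_s_eq:
  assumes m: "1 \<le> m" and s: "0 < s"
  shows "sol_s m (s ^ 2 + s ^ (2 * m)) = s"
  unfolding sol_s_def
proof (rule the_equality)
  show "0 < s \<and> s ^ 2 + s ^ (2 * m) = s ^ 2 + s ^ (2 * m)" using s by simp
  fix t assume t: "0 < t \<and> t ^ 2 + t ^ (2 * m) = s ^ 2 + s ^ (2 * m)"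
  have mono: "x < y \<Longrightarrow> 0 < x \<Longrightarrow> x ^ 2 + x ^ (2 * m) < y ^ 2 + y ^ (2 * m)" for x y :: real
    using power_strict_mono[of x y 2] power_strict_mono[of x y "2 * m"] m by (intro add_strict_mono) auto
  show "t = s"
    using mono[of t s] mono[of s t] t s by (cases t s rule: linorder_cases) auto
qed

lemma melnikov_closed_form:
  assumes m: "1 \<le> m"
  shows "\<exists>P R. degree P \<le> m * (n + 1) \<and> degree R \<le> m * (n + 1) \<and>
    (\<forall>s>0. melnikov m n ap bp am bm (s ^ 2 + s ^ (2 * m)) = poly P s + poly R s * arc_angle m s)"
proof -
  let ?r = "\<lambda>s. sqrt (s ^ 2 + s ^ (2 * m))" and ?D = "m * (n + 1)"
  let ?I = "\<lambda>p q s t. poly2 n q (?r s * cos t) (?r s * sin t) * (?r s * sin t)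
      + poly2 n p (?r s * cos t) (?r s * sin t) * (?r s * cos t)"
  have le: "m * (a + b) \<le> ?D" if "a + b \<le> Suc n" for a b
    using mult_le_mono2[OF that, of m] by simp
  have "arc_integral_form m ?D (?I ap bp) (\<lambda>s. {angle_B m s..angle_A m s})"
    by (intro arc_integral_form_cw_integrand arc_integral_form_mono[OF arc_integral_form_monom(1)[OF m] le])
  then obtain P1 R1 where 1: "degree P1 \<le> ?D" "degree R1 \<le> ?D"
    "\<forall>s>0. (?I ap bp s has_integral poly P1 s + poly R1 s * arc_angle m s) {angle_B m s..angle_A m s}"
    unfolding arc_integral_form_def by blast
  have "arc_integral_form m ?D (?I am bm) (\<lambda>s. {angle_A m s - 2 * pi..angle_B m s})"
    by (intro arc_integral_form_cw_integrand arc_integral_form_mono[OF arc_integral_form_monom(2)[OF m] le])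
  then obtain P2 R2 where 2: "degree P2 \<le> ?D" "degree R2 \<le> ?D"
    "\<forall>s>0. (?I am bm s has_integral poly P2 s + poly R2 s * arc_angle m s) {angle_A m s - 2 * pi..angle_B m s}"
    unfolding arc_integral_form_def by blast
  have "melnikov m n ap bp am bm (s ^ 2 + s ^ (2 * m)) = poly (P1 + P2) s + poly (R1 + R2) s * arc_angle m s"
    if s: "0 < s" for s
  proof -
    have pm: "x ^ m = x * x ^ (m - 1)" for x :: real using m by (cases m) auto
    have B: "arctan (s ^ m / s) = angle_B m s" using s by (simp add: angle_B_def pm)
    have A: "pi + arctan ((- s) ^ m / (- s)) = angle_A m s" using s by (simp add: angle_A_def pm[of "- s"])
    show ?thesis
      unfolding melnikov_def Let_def sol_s_eq[OF m s] A B cw_arc_int_def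
      using integral_unique[OF 1(3)[rule_format, OF s]] integral_unique[OF 2(3)[rule_format, OF s]]
      by (simp add: algebra_simps)
  qed
  with 1(1,2) 2(1,2) show ?thesis by (intro exI[of _ "P1 + P2"] exI[of _ "R1 + R2"]) (auto intro: degree_add_le)
qed
lemma arc_angle_DERIV_rational:
  "\<exists>K E. degree K \<le> m \<and> degree E \<le> 2 * m \<and> (\<forall>s. poly E s \<noteq> 0) \<and>
     (\<forall>s. DERIV (arc_angle m) s :> poly K s / poly E s)"
proof -
  define U1 U2 :: "real poly" where "U1 = [:0, -1:] ^ (m - 1)" and "U2 = [:0, 1:] ^ (m - 1)"
  define E :: "real poly" where "E = [:1:] + monom 1 (2 * (m - 1))"
  define K where "K = pderiv U1 - pderiv U2"
  have E: "poly E s = 1 + s ^ (2 * (m - 1))" for s by (simp add: E_def poly_monom)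
  have E0: "poly E s \<noteq> 0" for s
  proof -
    have "0 \<le> s ^ (2 * (m - 1))" by (simp add: power_mult)
    thus ?thesis unfolding E by linarith
  qed
  have dE: "degree E \<le> 2 * m" unfolding E_def by (intro degree_add_le) (auto intro: order.trans[OF degree_monom_le])
  have "degree (pderiv ([:0, c:] ^ (m - 1))) \<le> m" for c :: real
    using degree_pderiv[of "[:0, c:] ^ (m - 1)"] degree_power_le[of "[:0, c:]" "m - 1"] by (cases "c = 0") auto
  hence dK: "degree K \<le> m" unfolding K_def U1_def U2_def by (intro degree_diff_le)
  have "DERIV (arc_angle m) s :> poly K s / poly E s" for s
  proof -
    have T: "arc_angle m = (\<lambda>s. pi + arctan (poly U1 s) - arctan (poly U2 s))"
      by (rule ext) (simp add: arc_angle_def angle_A_def angle_B_def poly_power U1_def U2_def)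
    have e: "1 + (poly U1 s)\<^sup>2 = poly E s" "1 + (poly U2 s)\<^sup>2 = poly E s"
      unfolding E U1_def U2_def by (simp_all add: poly_power power_mult[symmetric] power_mult_distrib mult.commute)
    have "DERIV (\<lambda>s. pi + arctan (poly U1 s) - arctan (poly U2 s)) s :>
          0 + inverse (1 + (poly U1 s)\<^sup>2) * poly (pderiv U1) s - inverse (1 + (poly U2 s)\<^sup>2) * poly (pderiv U2) s"
      by (intro DERIV_diff DERIV_add DERIV_const DERIV_chain2[OF DERIV_arctan poly_DERIV])
    thus ?thesis unfolding T e K_def using E0[of s] by (simp add: field_simps)
  qed
  with dK dE E0 show ?thesis by blast
qed

lemma level_poly_pderiv_pos:
  assumes "0 < s"
  shows "0 < poly (pderiv (level_poly m)) s"
proof -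
  have "DERIV (\<lambda>s. poly (level_poly m) s) s :> 2 * s + real (2 * m) * s ^ (2 * m - 1)"
    unfolding poly_level_poly by (rule DERIV_cong, (rule derivative_eq_intros refl)+) simp
  hence "poly (pderiv (level_poly m)) s = 2 * s + real (2 * m) * s ^ (2 * m - 1)"
    by (rule DERIV_unique[OF poly_DERIV])
  moreover have "0 \<le> real (2 * m) * s ^ (2 * m - 1)" using assms by simp
  ultimately show ?thesis using assms by linarith
qed

lemma sol_s_level:
  assumes m: "1 \<le> m" and h: "0 < h"
  shows "0 < sol_s m h" "poly (level_poly m) (sol_s m h) = h"
proof -
  have z: "(0::real) ^ (2 * m) = 0" using m by simp
  have "poly (level_poly m) 0 \<le> h" using h by (simp add: poly_level_poly z)
  moreover have "h \<le> poly (level_poly m) (h + 1)"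
    using h zero_le_power[of "h + 1" "2 * m"] unfolding poly_level_poly by (simp add: power2_eq_square algebra_simps)
  ultimately obtain x where x: "0 \<le> x" "poly (level_poly m) x = h"
    using IVT[of "\<lambda>s. poly (level_poly m) s" 0 h "h + 1"] h by auto
  have x0: "0 < x" using x h z by (cases "x = 0") (auto simp: poly_level_poly)
  have "sol_s m h = x" using sol_s_eq[OF m x0] x(2) by (simp add: poly_level_poly)
  thus "0 < sol_s m h" "poly (level_poly m) (sol_s m h) = h" using x0 x(2) by auto
qed

lemma DERIV_sol_s:
  assumes m: "1 \<le> m" and h: "0 < h"
  shows "DERIV (sol_s m) h :> 1 / poly (pderiv (level_poly m)) (sol_s m h)"
proof -
  let ?\<phi> = "\<lambda>s. poly (level_poly m) s"
  have inv: "sol_s m (?\<phi> z) = z" if "0 < z" for z using sol_s_eq[OF m that] by (simp add: poly_level_poly)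
  have s0: "0 < sol_s m h" "?\<phi> (sol_s m h) = h" using sol_s_level[OF m h] by auto
  have "isCont (sol_s m) (?\<phi> (sol_s m h))"
  proof (rule isCont_inverse_function[where d = "sol_s m h / 2" and f = ?\<phi> and x = "sol_s m h"])
    show "sol_s m (?\<phi> z) = z" if "\<bar>z - sol_s m h\<bar> \<le> sol_s m h / 2" for z
      by (rule inv) (use that s0 in linarith)
  qed (use s0 in auto)
  hence "isCont (sol_s m) h" using s0 by simp
  hence "DERIV (sol_s m) h :> inverse (poly (pderiv (level_poly m)) (sol_s m h))"
    using level_poly_pderiv_pos[of _ m, OF s0(1)] h sol_s_level[OF m]
    by (intro DERIV_inverse_function[where f = ?\<phi> and a = 0 and b = "h + 1"] poly_DERIV) auto
  thus ?thesis by (simp add: divide_inverse)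
qed

lemma melnikov_zeros_mult_le:
  assumes m: "1 \<le> m" and nz: "0 < h0" "melnikov m n ap bp am bm h0 \<noteq> 0"
  shows "zeros_mult (melnikov m n ap bp am bm) {0<..}
    \<le> enat (m * (n + 1) + (m + 2 * m) * (m * (n + 1) + 1) + (m * (n + 1) + 1))"
proof -
  let ?M = "melnikov m n ap bp am bm" and ?\<sigma> = "sol_s m" and ?D = "pderiv (level_poly m)"
  obtain P R where PR: "degree P \<le> m * (n + 1)" "degree R \<le> m * (n + 1)"
    "\<forall>s>0. ?M (s ^ 2 + s ^ (2 * m)) = poly P s + poly R s * arc_angle m s"
    using melnikov_closed_form[OF m] by blast
  obtain K E where KE: "degree K \<le> m" "degree E \<le> 2 * m" "\<And>s. poly E s \<noteq> 0"
    "\<And>s. DERIV (arc_angle m) s :> poly K s / poly E s"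
    using arc_angle_DERIV_rational by blast
  define G where "G = (\<lambda>s. poly P s + poly R s * arc_angle m s)"
  have MG: "?M h = G (?\<sigma> h)" if "0 < h" for h
  proof -
    have "?M h = ?M (?\<sigma> h ^ 2 + ?\<sigma> h ^ (2 * m))"
      using sol_s_level(2)[OF m that] by (simp add: poly_level_poly)
    also have "\<dots> = G (?\<sigma> h)" using PR(3) sol_s_level(1)[OF m that] by (simp add: G_def)
    finally show ?thesis .
  qed
  have "zeros_mult ?M {0<..} \<le> zeros_mult G {0<..}"
  proof (rule zeros_mult_reparam_le[where \<psi> = "\<lambda>s. 1 / poly ?D s"])
    show "smooth_on {0<..} G"
      unfolding G_def by (rule smooth_on_subset[OF smooth_on_poly_plus_poly_mult[OF KE(3,4)]]) simp
    have "poly ?D s \<noteq> 0" if "s \<in> {0<..}" for s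
      using level_poly_pderiv_pos[of s m] that by simp
    from smooth_on_poly_quot[OF open_greaterThan this, where N = 1 and j = 1]
    show "smooth_on {0<..} (\<lambda>s. 1 / poly ?D s)" by simp
    show "inj_on ?\<sigma> {0<..}" by (rule inj_on_inverseI[where g = "\<lambda>s. poly (level_poly m) s"]) (use sol_s_level[OF m] in auto)
    show "1 / poly ?D s \<noteq> 0" if "0 < s" for s using level_poly_pderiv_pos[of s m] that by simp
    show "0 < ?\<sigma> h" if "0 < h" for h using sol_s_level(1)[OF m that] .
    show "DERIV ?\<sigma> h :> 1 / poly ?D (?\<sigma> h)" if "0 < h" for h using DERIV_sol_s[OF m that] .
    show "?M h = G (?\<sigma> h)" if "0 < h" for h using MG[OF that] .
  qed
  also have "\<dots> \<le> enat (m * (n + 1) + (m + 2 * m) * (m * (n + 1) + 1) + (m * (n + 1) + 1))"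
    unfolding G_def
    by (rule zeros_mult_poly_plus_poly_mult[OF KE(3,4) PR(1,2) KE(1,2) sol_s_level(1)[OF m nz(1)]])
       (use MG[OF nz(1)] nz(2) G_def in simp)
  finally show ?thesis .
qed

theorem theorem1p2:
  fixes m :: nat
  assumes "m \<ge> 1"
  shows "\<exists>k l :: nat. \<forall>n \<ge> 1. H_bound m n \<le> enat (k * n + l)"
proof (intro exI allI impI)
  fix n :: nat
  let ?k = "2 * m + 3 * m * m" and ?l = "3 * m * m + 5 * m + 1"
  have eq: "m * (n + 1) + (m + 2 * m) * (m * (n + 1) + 1) + (m * (n + 1) + 1) = ?k * n + ?l"
    by (simp add: algebra_simps)
  show "H_bound m n \<le> enat (?k * n + ?l)"
    unfolding H_bound_def
  proof (rule SUP_least)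
    fix c assume "c \<in> {(ap, bp, am, bm). \<exists>h>0. melnikov m n ap bp am bm h \<noteq> 0}"
    then obtain ap bp am bm h0 where c: "c = (ap, bp, am, bm)" "0 < h0" "melnikov m n ap bp am bm h0 \<noteq> 0"
      by auto
    show "(case c of (ap, bp, am, bm) \<Rightarrow> zeros_mult (melnikov m n ap bp am bm) {0<..}) \<le> enat (?k * n + ?l)"
      using melnikov_zeros_mult_le[OF assms c(2,3)] unfolding c(1) eq by simp
  qed
qed

end
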